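(* Let $M$ be a message set such that $G_M$ is an oriented ring. For any $M$-system $S$, $S$ is $1$-synchronizable if and only if it is synchronizable.
   Context: A message set $M=(\Sigma_M,N,\mathrm{src},\mathrm{dst})$: finite set of messages, $N\ge1$ peers, $\mathrm{src}(a)\neq\mathrm{dst}(a)\in\{1,\dots,N\}$. Its communication topology $G_M$ is the directed graph on $\{1,\dots,N\}$ with an edge $i\to j$ iff some message $a$ has $\mathrm{src}(a)=i$, $\mathrm{dst}(a)=j$; $G_M$ is an oriented ring if its edge set is exactly $\{(i,j)\mid j=i+1 \bmod N\}$. Actions $!a$ (by peer $\mathrm{src}(a)$), $?a$ (by peer $\mathrm{dst}(a)$); traces are finite action sequences; $!?a$ abbreviates $!a\cdot?a$. For a trace $\tau$, $\pi_!(\tau)$ is the sequence of sent messages; $\mathrm{buf}_{i\to j}(\tau)$ is the word $w$ (if any) with (sent on $i\to j$) $=$ (received on $i\to j$)$\cdot w$. $\tau$ is FIFO ($k$-bounded FIFO) if for all $i,j$ and prefixes $\tau'$, $\mathrm{buf}_{i\to j}(\tau')$ is defined (and has length $\le k$); synchronous if of the form $!?a_1\cdots!?a_k$. An $M$-system $S=(P_1,\dots,P_N)$: finite automata $P_i$ (all states accepting) over actions of peer $i$, with one FIFO channel per ordered pair $i\neq j$. A configuration: one control state per peer and contents $w_{i,j}$ of channels; stable if all channels empty. $!a$ ($\mathrm{src}(a)=i,\mathrm{dst}(a)=j$) moves $P_i$ and appends $a$ to $w_{i,j}$; $?a$ moves $P_j$ and removes $a$ from the head of $w_{i,j}$; $c_0$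 is the initial configuration. $T_k(S)$ ($k\ge1$): $k$-bounded FIFO traces $\tau$ with $c_0\xrightarrow{\tau}c$ for some $c$; $T_0(S)$: synchronous such traces; $T_\omega(S)=\bigcup_kT_k(S)$. $ST_k(S)=\{\pi_!(\tau)\mid\tau\in T_k(S)\}\cup\{(\pi_!(\tau),c)\mid c_0\xrightarrow{\tau}c,\ c\text{ stable},\ \tau\in T_k(S)\}$. $S$ is synchronizable if $ST_0(S)=ST_\omega(S)$ and $1$-synchronizable if $ST_0(S)=ST_1(S)$. *)

theory Defs
  imports Main
begin

record 'm msgset =
  msgs   :: "'m set"
  npeers :: nat           (* N, peers are 1..N *)
  src    :: "'m \<Rightarrow> nat"
  dst    :: "'m \<Rightarrow> nat"

definition wf_msgset :: "'m msgset \<Rightarrow> bool" where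
  "wf_msgset M \<longleftrightarrow> finite (msgs M) \<and> npeers M \<ge> 1 \<and>
     (\<forall>a\<in>msgs M. src M a \<in> {1..npeers M} \<and> dst M a \<in> {1..npeers M} \<and> src M a \<noteq> dst M a)"

definition topology :: "'m msgset \<Rightarrow> (nat \<times> nat) set" where
  "topology M = {(src M a, dst M a) | a. a \<in> msgs M}"

text \<open>Oriented ring: edge set exactly i -> i+1 mod N, peers numbered 1..N
  (so the successor of N is 1).\<close>
definition oriented_ring :: "'m msgset \<Rightarrow> bool" where
  "oriented_ring M \<longleftrightarrow>
     topology M = {(i, (i mod npeers M) + 1) | i. i \<in> {1..npeers M}}"

datatype 'm action = Send 'm | Recv 'm

definition actor :: "'m msgset \<Rightarrow> 'm action \<Rightarrow> nat" where
  "actor M act = (case act of Send a \<Rightarrow> src M a | Recv a \<Rightarrow> dst M a)"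

definition msg_of :: "'m action \<Rightarrow> 'm" where
  "msg_of act = (case act of Send a \<Rightarrow> a | Recv a \<Rightarrow> a)"

definition sends :: "'m action list \<Rightarrow> 'm list" where
  "sends \<tau> = [a. Send a \<leftarrow> \<tau>]"

definition sent_on :: "'m msgset \<Rightarrow> nat \<Rightarrow> nat \<Rightarrow> 'm action list \<Rightarrow> 'm list" where
  "sent_on M i j \<tau> = [a. Send a \<leftarrow> \<tau>, src M a = i \<and> dst M a = j]"

definition recv_on :: "'m msgset \<Rightarrow> nat \<Rightarrow> nat \<Rightarrow> 'm action list \<Rightarrow> 'm list" where
  "recv_on M i j \<tau> = [a. Recv a \<leftarrow> \<tau>, src M a = i \<and> dst M a = j]"

definition is_buf :: "'m msgset \<Rightarrow> nat \<Rightarrow> nat \<Rightarrow> 'm action list \<Rightarrow> 'm list \<Rightarrow> bool" where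
  "is_buf M i j \<tau> w \<longleftrightarrow> sent_on M i j \<tau> = recv_on M i j \<tau> @ w"

definition fifo_trace :: "'m msgset \<Rightarrow> 'm action list \<Rightarrow> bool" where
  "fifo_trace M \<tau> \<longleftrightarrow> (\<forall>n \<le> length \<tau>. \<forall>i j. \<exists>w. is_buf M i j (take n \<tau>) w)"

definition bounded_fifo_trace :: "'m msgset \<Rightarrow> nat \<Rightarrow> 'm action list \<Rightarrow> bool" where
  "bounded_fifo_trace M k \<tau> \<longleftrightarrow>
     (\<forall>n \<le> length \<tau>. \<forall>i j. \<exists>w. is_buf M i j (take n \<tau>) w \<and> length w \<le> k)"

definition synchronous_trace :: "'m action list \<Rightarrow> bool" where
  "synchronous_trace \<tau> \<longleftrightarrow> (\<exists>as. \<tau> = concat (map (\<lambda>a. [Send a, Recv a]) as))"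

text \<open>A peer: finite automaton (all states accepting), possibly nondeterministic.\<close>
record ('s, 'm) peer =
  states :: "'s set"
  init   :: 's
  trans  :: "('s \<times> 'm action \<times> 's) set"

definition wf_system :: "'m msgset \<Rightarrow> (nat \<Rightarrow> ('s, 'm) peer) \<Rightarrow> bool" where
  "wf_system M P \<longleftrightarrow> (\<forall>i\<in>{1..npeers M}.
      finite (states (P i)) \<and> init (P i) \<in> states (P i) \<and> finite (trans (P i)) \<and>
      (\<forall>(q, act, q') \<in> trans (P i). q \<in> states (P i) \<and> q' \<in> states (P i) \<and>
          msg_of act \<in> msgs M \<and> actor M act = i))"

record ('s, 'm) config =
  ctrl  :: "nat \<Rightarrow> 's"
  chans :: "nat \<Rightarrow> nat \<Rightarrow> 'm list"

definition init_config :: "(nat \<Rightarrow> ('s, 'm) peer) \<Rightarrow> ('s, 'm) config" where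
  "init_config P = \<lparr> ctrl = (\<lambda>i. init (P i)), chans = (\<lambda>i j. []) \<rparr>"

definition stable :: "('s, 'm) config \<Rightarrow> bool" where
  "stable c \<longleftrightarrow> (\<forall>i j. chans c i j = [])"

inductive step :: "'m msgset \<Rightarrow> (nat \<Rightarrow> ('s, 'm) peer) \<Rightarrow> ('s, 'm) config \<Rightarrow> 'm action
                    \<Rightarrow> ('s, 'm) config \<Rightarrow> bool"
  for M P where
  send: "\<lbrakk> a \<in> msgs M; i = src M a; j = dst M a; (ctrl c i, Send a, q') \<in> trans (P i) \<rbrakk>
     \<Longrightarrow> step M P c (Send a)
           \<lparr> ctrl = (ctrl c)(i := q'),
             chans = (chans c)(i := (chans c i)(j := chans c i j @ [a])) \<rparr>"
| recv: "\<lbrakk> a \<in> msgs M; i = src M a; j = dst M a; chans c i j = a # w;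
           (ctrl c j, Recv a, q') \<in> trans (P j) \<rbrakk>
     \<Longrightarrow> step M P c (Recv a)
           \<lparr> ctrl = (ctrl c)(j := q'),
             chans = (chans c)(i := (chans c i)(j := w)) \<rparr>"

inductive run :: "'m msgset \<Rightarrow> (nat \<Rightarrow> ('s, 'm) peer) \<Rightarrow> ('s, 'm) config \<Rightarrow> 'm action list
                   \<Rightarrow> ('s, 'm) config \<Rightarrow> bool"
  for M P where
  run_nil: "run M P c [] c"
| run_cons: "\<lbrakk> step M P c act c'; run M P c' \<tau> c'' \<rbrakk> \<Longrightarrow> run M P c (act # \<tau>) c''"

definition traces :: "'m msgset \<Rightarrow> (nat \<Rightarrow> ('s, 'm) peer) \<Rightarrow> nat \<Rightarrow> 'm action list set" where
  "traces M P k = {\<tau>. (if k = 0 then synchronous_trace \<tau> else bounded_fifo_trace M k \<tau>)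
                        \<and> (\<exists>c. run M P (init_config P) \<tau> c)}"

definition traces_omega :: "'m msgset \<Rightarrow> (nat \<Rightarrow> ('s, 'm) peer) \<Rightarrow> 'm action list set" where
  "traces_omega M P = (\<Union>k\<in>{1..}. traces M P k)"

definition send_traces :: "'m msgset \<Rightarrow> (nat \<Rightarrow> ('s, 'm) peer) \<Rightarrow> 'm action list set
                          \<Rightarrow> ('m list + ('m list \<times> ('s, 'm) config)) set" where
  "send_traces M P T =
     Inl ` {sends \<tau> | \<tau>. \<tau> \<in> T} \<union>
     Inr ` {(sends \<tau>, c) | \<tau> c. \<tau> \<in> T \<and> run M P (init_config P) \<tau> c \<and> stable c}"

definition ST :: "'m msgset \<Rightarrow> (nat \<Rightarrow> ('s, 'm) peer) \<Rightarrow> nat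
                   \<Rightarrow> ('m list + ('m list \<times> ('s, 'm) config)) set" where
  "ST M P k = send_traces M P (traces M P k)"

definition ST_omega :: "'m msgset \<Rightarrow> (nat \<Rightarrow> ('s, 'm) peer)
                   \<Rightarrow> ('m list + ('m list \<times> ('s, 'm) config)) set" where
  "ST_omega M P = send_traces M P (traces_omega M P)"

definition synchronizable :: "'m msgset \<Rightarrow> (nat \<Rightarrow> ('s, 'm) peer) \<Rightarrow> bool" where
  "synchronizable M P \<longleftrightarrow> ST M P 0 = ST_omega M P"

definition one_synchronizable :: "'m msgset \<Rightarrow> (nat \<Rightarrow> ('s, 'm) peer) \<Rightarrow> bool" where
  "one_synchronizable M P \<longleftrightarrow> ST M P 0 = ST M P 1"

end

theory Submission
  imports Defs "HOL-Library.Sublist"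
begin

(*
  On an oriented ring every channel has a single writer and a single reader. Synchronizability
  implies 1-synchronizability because ST_0 \<subseteq> ST_1 \<subseteq> ST_\<omega>. For the converse, assume
  1-synchronizability; the point is that any FIFO run can be reproduced, one send at a time, by
  runs whose buffers never hold more than one message, and 1-synchronizability turns those into
  synchronous runs.

  By induction on the number of sends, the send sequence of every FIFO run is that of a synchronous
  run. To append a send x of peer j: if j's input channel is empty, j can follow its synchronous
  view (see below); otherwise the last message m of j's predecessor is still in transit, the run
  without m is shorter, and m is put back as a message that is never received.

  A peer k can follow its synchronous view, by induction on the number of pairs (send of the
  predecessor p, later send of k): if k only sends with an empty input channel, its actual view is
  its synchronous view; otherwise the first send y of k overtaking a message m of p can be moved
  before m without any peer noticing, and a 1-bounded run in which m is received right after y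
  carries the resulting path of k back.
*)

section \<open>Traces and FIFO buffers\<close>

lemma all_prefixes_append:
  "(\<forall>\<sigma>. prefix \<sigma> (A @ B) \<longrightarrow> R \<sigma>) \<longleftrightarrow> (\<forall>\<sigma>. prefix \<sigma> A \<longrightarrow> R \<sigma>) \<and> (\<forall>\<sigma>. prefix \<sigma> B \<longrightarrow> R (A @ \<sigma>))"
  unfolding prefix_append by blast

lemma prefix_singleton: "prefix \<sigma> [x] \<longleftrightarrow> \<sigma> = [] \<or> \<sigma> = [x]"
  by (auto simp: prefix_Cons)

lemma prefix_drop_append: "prefix (xs @ ys) zs \<Longrightarrow> prefix ys (drop (length xs) zs)"
  by (auto simp: prefix_def)

lemma prefix_filter_ex: "prefix \<sigma> (filter Q xs) \<Longrightarrow> \<exists>\<sigma>'. prefix \<sigma>' xs \<and> \<sigma> = filter Q \<sigma>'"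
proof (induction xs arbitrary: \<sigma>)
  case (Cons x xs)
  show ?case
  proof (cases "Q x \<and> \<sigma> \<noteq> []")
    case True
    then obtain \<sigma>1 where "\<sigma> = x # \<sigma>1" "prefix \<sigma>1 (filter Q xs)"
      using Cons.prems by (auto simp: prefix_Cons)
    with True show ?thesis using Cons.IH[of \<sigma>1] by (metis Cons_prefix_Cons filter.simps(2))
  next
    case False
    then have "\<sigma> = [] \<or> prefix \<sigma> (filter Q xs)" using Cons.prems by (auto simp: prefix_Cons)
    then show ?thesis using Cons.IH[of \<sigma>] False by (metis Nil_prefix filter.simps(1) prefix_Cons filter.simps(2))
  qed
qed simp

definition sent_by :: "'m msgset \<Rightarrow> nat \<Rightarrow> 'm action list \<Rightarrow> 'm list" where
  "sent_by M i \<tau> = [a. Send a \<leftarrow> \<tau>, src M a = i]"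

definition recvd_from :: "'m msgset \<Rightarrow> nat \<Rightarrow> 'm action list \<Rightarrow> 'm list" where
  "recvd_from M i \<tau> = [a. Recv a \<leftarrow> \<tau>, src M a = i]"

definition actions_of :: "'m msgset \<Rightarrow> nat \<Rightarrow> 'm action list \<Rightarrow> 'm action list" where
  "actions_of M i \<tau> = filter (\<lambda>act. actor M act = i) \<tau>"

definition sync_actions :: "'m list \<Rightarrow> 'm action list" where
  "sync_actions w = concat (map (\<lambda>a. [Send a, Recv a]) w)"

abbreviation sync_view :: "'m msgset \<Rightarrow> nat \<Rightarrow> 'm list \<Rightarrow> 'm action list" where
  "sync_view M i w \<equiv> actions_of M i (sync_actions w)"

lemma sent_by_simps [simp]:
  "sent_by M i [] = []" "sent_by M i (xs @ ys) = sent_by M i xs @ sent_by M i ys"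
  "sent_by M i (Send a # xs) = (if src M a = i then a # sent_by M i xs else sent_by M i xs)"
  "sent_by M i (Recv a # xs) = sent_by M i xs"
  by (auto simp: sent_by_def)

lemma recvd_from_simps [simp]:
  "recvd_from M i [] = []" "recvd_from M i (xs @ ys) = recvd_from M i xs @ recvd_from M i ys"
  "recvd_from M i (Recv a # xs) = (if src M a = i then a # recvd_from M i xs else recvd_from M i xs)"
  "recvd_from M i (Send a # xs) = recvd_from M i xs"
  by (auto simp: recvd_from_def)

lemma actions_of_simps [simp]:
  "actions_of M i [] = []" "actions_of M i (xs @ ys) = actions_of M i xs @ actions_of M i ys"
  "actions_of M i (x # xs) = (if actor M x = i then x # actions_of M i xs else actions_of M i xs)"
  by (auto simp: actions_of_def)

lemma sends_simps [simp]:
  "sends [] = []" "sends (xs @ ys) = sends xs @ sends ys"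
  "sends (Send a # xs) = a # sends xs" "sends (Recv a # xs) = sends xs"
  by (auto simp: sends_def)

lemma actor_simps [simp]: "actor M (Send a) = src M a" "actor M (Recv a) = dst M a"
  by (auto simp: actor_def)

lemma msg_of_simps [simp]: "msg_of (Send a) = a" "msg_of (Recv a) = a"
  by (auto simp: msg_of_def)

lemma sync_actions_simps [simp]:
  "sync_actions [] = []" "sync_actions (xs @ ys) = sync_actions xs @ sync_actions ys"
  "sync_actions (a # xs) = Send a # Recv a # sync_actions xs"
  by (auto simp: sync_actions_def)

lemma sends_sync_actions [simp]: "sends (sync_actions w) = w"
  by (induction w) auto

lemma synchronous_trace_iff: "synchronous_trace \<sigma> \<longleftrightarrow> \<sigma> = sync_actions (sends \<sigma>)"
  unfolding synchronous_trace_def sync_actions_def[symmetric]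
  using sends_sync_actions by metis

lemma set_sends: "a \<in> set (sends \<tau>) \<longleftrightarrow> Send a \<in> set \<tau>"
  by (auto simp: sends_def)

lemma sent_by_eq_Nil: "(\<forall>a. Send a \<in> set \<tau> \<longrightarrow> src M a \<noteq> i) \<Longrightarrow> sent_by M i \<tau> = []"
  by (auto simp: sent_by_def filter_empty_conv split: action.split)

inductive peer_path :: "('s, 'm) peer \<Rightarrow> 's \<Rightarrow> 'm action list \<Rightarrow> 's \<Rightarrow> bool" for p where
  Nil: "peer_path p q [] q"
| Cons: "(q, act, q') \<in> trans p \<Longrightarrow> peer_path p q' u q'' \<Longrightarrow> peer_path p q (act # u) q''"

lemma peer_path_Nil_iff [simp]: "peer_path p q [] q' \<longleftrightarrow> q' = q"
  by (auto intro: peer_path.Nil elim: peer_path.cases)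

lemma peer_path_Cons: "peer_path p q (act # u) q'' \<longleftrightarrow> (\<exists>q'. (q, act, q') \<in> trans p \<and> peer_path p q' u q'')"
  by (auto intro: peer_path.Cons elim: peer_path.cases)

lemma peer_path_append:
  "peer_path p q (u @ v) q'' \<longleftrightarrow> (\<exists>q'. peer_path p q u q' \<and> peer_path p q' v q'')"
  by (induction u arbitrary: q) (simp_all add: peer_path_Cons, blast)

lemma peer_path_snoc: "peer_path p q (u @ [act]) q'' \<longleftrightarrow> (\<exists>q'. peer_path p q u q' \<and> (q', act, q'') \<in> trans p)"
  by (simp add: peer_path_append peer_path_Cons)

lemma run_Cons: "run M P c (act # t) c'' \<longleftrightarrow> (\<exists>c'. step M P c act c' \<and> run M P c' t c'')"
  by (auto intro: run.intros elim: run.cases)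

lemma run_Nil: "run M P c [] c' \<longleftrightarrow> c' = c"
  by (auto intro: run.intros elim: run.cases)

lemma run_append:
  "run M P c (t1 @ t2) c'' \<longleftrightarrow> (\<exists>c'. run M P c t1 c' \<and> run M P c' t2 c'')"
  by (induction t1 arbitrary: c) (simp_all add: run_Cons run_Nil, blast)

lemma run_snoc: "run M P c (t @ [act]) c'' \<longleftrightarrow> (\<exists>c'. run M P c t c' \<and> step M P c' act c'')"
  by (simp add: run_append run_Cons run_Nil)

text \<open>Channels are indexed by their sender, as on a ring where each peer has a single outgoing
  channel; \<open>Q i\<close> are the contents of the channel out of \<open>i\<close> before the trace.\<close>

definition pending_after :: "'m msgset \<Rightarrow> (nat \<Rightarrow> 'm list) \<Rightarrow> 'm action list \<Rightarrow> nat \<Rightarrow> 'm list" where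
  "pending_after M Q \<tau> i = drop (length (recvd_from M i \<tau>)) (Q i @ sent_by M i \<tau>)"

definition fifo_from :: "'m msgset \<Rightarrow> (nat \<Rightarrow> 'm list) \<Rightarrow> 'm action list \<Rightarrow> bool" where
  "fifo_from M Q \<tau> \<longleftrightarrow> (\<forall>\<sigma>. prefix \<sigma> \<tau> \<longrightarrow> (\<forall>i. prefix (recvd_from M i \<sigma>) (Q i @ sent_by M i \<sigma>)))"

definition bounded_from :: "'m msgset \<Rightarrow> nat \<Rightarrow> (nat \<Rightarrow> 'm list) \<Rightarrow> 'm action list \<Rightarrow> bool" where
  "bounded_from M K Q \<tau> \<longleftrightarrow> (\<forall>\<sigma>. prefix \<sigma> \<tau> \<longrightarrow> (\<forall>i. length (pending_after M Q \<sigma> i) \<le> K))"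

definition fifo1_segment :: "'m msgset \<Rightarrow> (nat \<Rightarrow> 'm list) \<Rightarrow> 'm action list \<Rightarrow> (nat \<Rightarrow> 'm list) \<Rightarrow> bool" where
  "fifo1_segment M Q \<tau> Q' \<longleftrightarrow> fifo_from M Q \<tau> \<and> bounded_from M 1 Q \<tau> \<and> pending_after M Q \<tau> = Q'"

lemma pending_after_Nil [simp]: "pending_after M Q [] = Q"
  by (simp add: pending_after_def fun_eq_iff)

lemma pending_after_Send: "pending_after M Q [Send a] = Q(src M a := Q (src M a) @ [a])"
  by (auto simp: pending_after_def)

lemma pending_after_Recv: "Q (src M a) = a # r \<Longrightarrow> pending_after M Q [Recv a] = Q(src M a := r)"
  by (auto simp: pending_after_def)

lemma fifo_from_Nil [simp]: "fifo_from M Q []"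
  by (simp add: fifo_from_def)

lemma fifo_fromD: "fifo_from M Q \<tau> \<Longrightarrow> prefix (recvd_from M i \<tau>) (Q i @ sent_by M i \<tau>)"
  by (simp add: fifo_from_def)

lemma fifo_from_Send: "fifo_from M Q [Send a]"
  by (simp add: fifo_from_def prefix_singleton)

lemma fifo_from_Recv: "fifo_from M Q [Recv a] \<longleftrightarrow> (\<exists>r. Q (src M a) = a # r)"
  unfolding fifo_from_def prefix_singleton by (cases "Q (src M a)") auto

lemma pending_after_append:
  assumes "fifo_from M Q A"
  shows "pending_after M Q (A @ B) = pending_after M (pending_after M Q A) B"
proof
  fix i
  obtain z where z: "Q i @ sent_by M i A = recvd_from M i A @ z"
    using fifo_fromD[OF assms] by (auto simp: prefix_def)
  then show "pending_after M Q (A @ B) i = pending_after M (pending_after M Q A) B i"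
    by (simp add: pending_after_def flip: append_assoc)
qed

lemma fifo_from_append:
  "fifo_from M Q (A @ B) \<longleftrightarrow> fifo_from M Q A \<and> fifo_from M (pending_after M Q A) B"
proof (cases "fifo_from M Q A")
  case True
  have "prefix (recvd_from M i (A @ \<sigma>)) (Q i @ sent_by M i (A @ \<sigma>)) \<longleftrightarrow>
        prefix (recvd_from M i \<sigma>) (pending_after M Q A i @ sent_by M i \<sigma>)" for i \<sigma>
  proof -
    obtain z where z: "Q i @ sent_by M i A = recvd_from M i A @ z"
      using fifo_fromD[OF True] by (auto simp: prefix_def)
    then have "Q i @ sent_by M i (A @ \<sigma>) = recvd_from M i A @ z @ sent_by M i \<sigma>"
      by (metis append_assoc sent_by_simps(2))
    moreover have "pending_after M Q A i = z"
      using z by (simp add: pending_after_def)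
    ultimately show ?thesis
      by (simp only: recvd_from_simps(2) same_prefix_prefix)
  qed
  then show ?thesis
    using True unfolding fifo_from_def
      all_prefixes_append[of A B "\<lambda>\<sigma>. \<forall>i. prefix (recvd_from M i \<sigma>) (Q i @ sent_by M i \<sigma>)"]
    by presburger
next
  case False
  then show ?thesis
    unfolding fifo_from_def by (meson prefix_prefix)
qed

lemma fifo_from_Cons_Send:
  "fifo_from M Q (Send a # \<tau>) \<longleftrightarrow> fifo_from M (Q(src M a := Q (src M a) @ [a])) \<tau>"
  using fifo_from_append[of M Q "[Send a]" \<tau>] by (simp add: fifo_from_Send pending_after_Send)

lemma bounded_from_append:
  assumes "fifo_from M Q A"
  shows "bounded_from M K Q (A @ B) \<longleftrightarrow> bounded_from M K Q A \<and> bounded_from M K (pending_after M Q A) B"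
  unfolding bounded_from_def
    all_prefixes_append[of A B "\<lambda>\<sigma>. \<forall>i. length (pending_after M Q \<sigma> i) \<le> K"]
  by (simp add: pending_after_append[OF assms])

lemma fifo1_segment_append:
  "fifo1_segment M Q A Q' \<Longrightarrow> fifo1_segment M Q' B Q'' \<Longrightarrow> fifo1_segment M Q (A @ B) Q''"
  by (simp add: fifo1_segment_def fifo_from_append bounded_from_append pending_after_append)

lemma fifo1_segment_Nil: "\<forall>i. length (Q i) \<le> 1 \<Longrightarrow> fifo1_segment M Q [] Q"
  by (simp add: fifo1_segment_def bounded_from_def)

lemma fifo1_segment_Send:
  "Q (src M a) = [] \<Longrightarrow> \<forall>i. length (Q i) \<le> 1 \<Longrightarrow> fifo1_segment M Q [Send a] (Q(src M a := [a]))"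
  by (simp add: fifo1_segment_def fifo_from_Send pending_after_Send bounded_from_def prefix_singleton)

lemma fifo1_segment_Recv:
  "Q (src M a) = [a] \<Longrightarrow> \<forall>i. length (Q i) \<le> 1 \<Longrightarrow> fifo1_segment M Q [Recv a] (Q(src M a := []))"
  by (simp add: fifo1_segment_def fifo_from_Recv pending_after_Recv bounded_from_def prefix_singleton)

lemma fifo1_segment_sync:
  "\<forall>a\<in>set w. Q (src M a) = [] \<Longrightarrow> \<forall>i. length (Q i) \<le> 1 \<Longrightarrow> fifo1_segment M Q (sync_actions w) Q"
proof (induction w)
  case Nil
  then show ?case by (simp add: fifo1_segment_Nil)
next
  case (Cons a w)
  have "fifo1_segment M Q [Send a] (Q(src M a := [a]))"
    using Cons.prems by (simp add: fifo1_segment_Send)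
  moreover have "fifo1_segment M (Q(src M a := [a])) [Recv a] Q"
    using Cons.prems fifo1_segment_Recv[of "Q(src M a := [a])" M a] by (simp add: fun_upd_idem)
  ultimately have "fifo1_segment M Q [Send a, Recv a] Q"
    using fifo1_segment_append by fastforce
  then show ?case
    using fifo1_segment_append Cons by fastforce
qed

lemma fifo1_segment_late_receive:
  fixes M :: "'m msgset"
  assumes m: "src M m = p" and y: "src M y = k" and kp: "k \<noteq> p"
    and \<beta>: "\<forall>b\<in>set \<beta>. src M b \<noteq> p \<and> src M b \<noteq> k" and \<zeta>: "\<zeta> = [] \<or> (\<exists>x. \<zeta> = [Send x] \<and> src M x = k)"
  shows "fifo1_segment M (\<lambda>_. [])
           (sync_actions \<alpha> @ [Send m] @ sync_actions \<beta> @ [Send y, Recv y, Recv m] @ sync_actions \<gamma> @ \<zeta>)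
           (if \<zeta> = [] then (\<lambda>_. []) else (\<lambda>_. [])(k := sends \<zeta>))"
proof -
  define E :: "nat \<Rightarrow> 'm list" where "E = (\<lambda>_. [])"
  define E1 where "E1 = E(p := [m])"
  have "fifo1_segment M E (sync_actions \<alpha>) E" "fifo1_segment M E1 (sync_actions \<beta>) E1"
    "fifo1_segment M E (sync_actions \<gamma>) E"
    using \<beta> by (auto simp: E1_def E_def intro!: fifo1_segment_sync)
  moreover have "fifo1_segment M E [Send m] E1"
    using fifo1_segment_Send[of E M m] m by (simp add: E1_def E_def)
  moreover have "fifo1_segment M E1 [Send y, Recv y, Recv m] E"
  proof -
    have send_y: "fifo1_segment M E1 [Send y] (E1(k := [y]))"
      using fifo1_segment_Send[of E1 M y] y kp by (simp add: E1_def E_def)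
    have recv_y: "fifo1_segment M (E1(k := [y])) [Recv y] E1"
      using fifo1_segment_Recv[of "E1(k := [y])" M y] y kp by (simp add: E1_def E_def fun_upd_twist fun_upd_idem)
    have recv_m: "fifo1_segment M E1 [Recv m] E"
      using fifo1_segment_Recv[of E1 M m] m by (simp add: E1_def E_def fun_upd_idem)
    show ?thesis
      using fifo1_segment_append[OF send_y fifo1_segment_append[OF recv_y recv_m]] by simp
  qed
  moreover have "fifo1_segment M E \<zeta> (if \<zeta> = [] then E else E(k := sends \<zeta>))"
    using \<zeta> fifo1_segment_Nil[of E] fifo1_segment_Send[of E M] by (auto simp: E_def)
  ultimately show ?thesis
    unfolding E_def by (blast intro: fifo1_segment_append)
qed

lemma prefix_recvd_from: "prefix \<sigma> \<rho> \<Longrightarrow> prefix (recvd_from M i \<sigma>) (recvd_from M i \<rho>)"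
  by (auto simp: prefix_def)

lemma sent_by_filter_not_actor:
  "sent_by M i (filter (\<lambda>act. actor M act \<noteq> p) \<rho>) = (if i = p then [] else sent_by M i \<rho>)"
proof (induction \<rho>)
  case (Cons act \<rho>) then show ?case by (cases act) auto
qed simp

lemma sent_by_filter_actor:
  "sent_by M i (filter (\<lambda>act. actor M act = p) \<rho>) = (if i = p then sent_by M i \<rho> else [])"
proof (induction \<rho>)
  case (Cons act \<rho>) then show ?case by (cases act) auto
qed simp

lemma actions_of_filter_actor:
  "actions_of M i (filter (\<lambda>act. actor M act \<noteq> p) \<rho>) = (if i = p then [] else actions_of M i \<rho>)"
  "actions_of M i (filter (\<lambda>act. actor M act = p) \<rho>) = (if i = p then actions_of M i \<rho> else [])"
  by (induction \<rho>) auto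

lemma sends_filter_not_actor:
  "\<forall>a. Send a \<in> set \<rho> \<longrightarrow> src M a \<noteq> p \<Longrightarrow> sends (filter (\<lambda>act. actor M act \<noteq> p) \<rho>) = sends \<rho>"
proof (induction \<rho>)
  case (Cons act \<rho>) then show ?case by (cases act) auto
qed simp

lemma sends_filter_actor:
  "\<forall>a. Send a \<in> set \<rho> \<longrightarrow> src M a \<noteq> p \<Longrightarrow> sends (filter (\<lambda>act. actor M act = p) \<rho>) = []"
proof (induction \<rho>)
  case (Cons act \<rho>) then show ?case by (cases act) auto
qed simp

lemma fifo_from_recvs:
  assumes "\<forall>act\<in>set B. \<exists>a. act = Recv a \<and> src M a = c" and "prefix (recvd_from M c B) (Q c)"
  shows "fifo_from M Q B"
  unfolding fifo_from_def
proof (intro allI impI)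
  fix \<sigma> i assume \<sigma>: "prefix \<sigma> B"
  then have "\<forall>act\<in>set \<sigma>. \<exists>a. act = Recv a \<and> src M a = c"
    using assms(1) set_mono_prefix by blast
  then have "sent_by M i \<sigma> = []" "recvd_from M i \<sigma> = (if i = c then recvd_from M c \<sigma> else [])"
    by (induction \<sigma>) auto
  moreover have "prefix (recvd_from M c \<sigma>) (Q c)"
    using prefix_recvd_from[OF \<sigma>] assms(2) prefix_order.trans by blast
  ultimately show "prefix (recvd_from M i \<sigma>) (Q i @ sent_by M i \<sigma>)"
    by simp
qed

lemma pending_after_cong:
  "(\<And>i. sent_by M i \<tau> = sent_by M i \<tau>' \<and> recvd_from M i \<tau> = recvd_from M i \<tau>') \<Longrightarrow>
   pending_after M Q \<tau> = pending_after M Q \<tau>'"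
  by (simp add: pending_after_def fun_eq_iff)

lemma actions_of_swap_sends:
  assumes "src M m = p" "src M y = k" "k \<noteq> p"
  shows "actions_of M i (\<tau>1 @ filter (\<lambda>act. actor M act \<noteq> p) \<tau>2 @ [Send y, Send m] @
           filter (\<lambda>act. actor M act = p) \<tau>2 @ \<tau>3) = actions_of M i (\<tau>1 @ [Send m] @ \<tau>2 @ [Send y] @ \<tau>3)"
  using assms by (auto simp: actions_of_filter_actor)

definition is_send_by :: "'m msgset \<Rightarrow> nat \<Rightarrow> 'm action \<Rightarrow> bool" where
  "is_send_by M i act = (case act of Send a \<Rightarrow> src M a = i | Recv a \<Rightarrow> False)"

lemma is_send_by_simps [simp]: "is_send_by M i (Send a) \<longleftrightarrow> src M a = i" "\<not> is_send_by M i (Recv a)"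
  by (auto simp: is_send_by_def)

lemma last_send_by:
  assumes "sent_by M p \<rho> \<noteq> []"
  obtains \<tau>1 m \<tau>2 where "\<rho> = \<tau>1 @ [Send m] @ \<tau>2" "src M m = p" "\<forall>a. Send a \<in> set \<tau>2 \<longrightarrow> src M a \<noteq> p"
proof -
  have "\<exists>act\<in>set \<rho>. is_send_by M p act"
    using assms sent_by_eq_Nil by fastforce
  then obtain \<tau>1 act \<tau>2 where "\<rho> = \<tau>1 @ act # \<tau>2" "is_send_by M p act" "\<forall>z\<in>set \<tau>2. \<not> is_send_by M p z"
    by (rule split_list_last_propE)
  moreover obtain m where "act = Send m" "src M m = p"
    using \<open>is_send_by M p act\<close> by (cases act) auto
  moreover have "\<forall>a. Send a \<in> set \<tau>2 \<longrightarrow> src M a \<noteq> p"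
    using \<open>\<forall>z\<in>set \<tau>2. \<not> is_send_by M p z\<close> by auto
  ultimately show ?thesis
    using that[of \<tau>1 m \<tau>2] by auto
qed

lemma last_send:
  assumes "sends \<tau> \<noteq> []"
  obtains \<tau>1 x \<rho> where "\<tau> = \<tau>1 @ [Send x] @ \<rho>" "sends \<rho> = []"
proof -
  obtain a where "a \<in> set (sends \<tau>)"
    using assms by (metis list.set_intros(1) neq_Nil_conv)
  then have "\<exists>act\<in>set \<tau>. \<exists>a. act = Send a"
    by (auto simp: set_sends)
  then obtain \<tau>1 act \<rho> where "\<tau> = \<tau>1 @ act # \<rho>" "\<exists>a. act = Send a" "\<forall>z\<in>set \<rho>. \<not> (\<exists>a. z = Send a)"
    by (rule split_list_last_propE)
  moreover from this(3) have "sends \<rho> = []"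
    by (metis equals0I set_empty set_sends)
  ultimately show ?thesis
    using that by auto
qed

fun inversions :: "'m msgset \<Rightarrow> nat \<Rightarrow> nat \<Rightarrow> 'm action list \<Rightarrow> nat" where
  "inversions M p k [] = 0"
| "inversions M p k (act # \<tau>) =
     (if is_send_by M p act then length (filter (is_send_by M k) \<tau>) else 0) + inversions M p k \<tau>"

lemma inversions_append:
  "inversions M p k (X @ Y) =
     inversions M p k X + inversions M p k Y + length (filter (is_send_by M p) X) * length (filter (is_send_by M k) Y)"
  by (induction X) (auto simp: algebra_simps)

lemma inversions_no_sends: "filter (is_send_by M p) X = [] \<Longrightarrow> inversions M p k X = 0"
  by (induction X) (auto split: if_splits)

lemma inversions_swap_sends:
  assumes m: "src M m = p" and y: "src M y = k" and "k \<noteq> p"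
    and \<tau>2: "\<forall>a. Send a \<in> set \<tau>2 \<longrightarrow> src M a \<noteq> p \<and> src M a \<noteq> k"
  shows "inversions M p k (\<tau>1 @ filter (\<lambda>act. actor M act \<noteq> p) \<tau>2 @ [Send y, Send m] @ filter (\<lambda>act. actor M act = p) \<tau>2 @ \<tau>3)
         < inversions M p k (\<tau>1 @ [Send m] @ \<tau>2 @ [Send y] @ \<tau>3)"
proof -
  have silent: "filter (is_send_by M p) xs = [] \<and> filter (is_send_by M k) xs = []" if "set xs \<subseteq> set \<tau>2" for xs
    using \<tau>2 that by (fastforce simp: filter_empty_conv is_send_by_def split: action.split)
  then have "inversions M p k xs = 0" if "set xs \<subseteq> set \<tau>2" for xs
    using that inversions_no_sends by blast
  then show ?thesis
    using silent[of \<tau>2] silent[of "filter (\<lambda>act. actor M act \<noteq> p) \<tau>2"]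
      silent[of "filter (\<lambda>act. actor M act = p) \<tau>2"] assms
    by (simp add: inversions_append)
qed

section \<open>Runs on an oriented ring\<close>

definition ring_succ :: "'m msgset \<Rightarrow> nat \<Rightarrow> nat" where
  "ring_succ M i = i mod npeers M + 1"

definition ring_pred :: "'m msgset \<Rightarrow> nat \<Rightarrow> nat" where
  "ring_pred M k = (if k = 1 then npeers M else k - 1)"

locale ring_system =
  fixes M :: "'m msgset" and P :: "nat \<Rightarrow> ('s, 'm) peer"
  assumes wf: "wf_msgset M" and ring: "oriented_ring M"
begin

abbreviation "N \<equiv> npeers M"

lemma msg_on_ring: "a \<in> msgs M \<Longrightarrow> src M a \<in> {1..N} \<and> dst M a = ring_succ M (src M a)"
proof -
  assume "a \<in> msgs M"
  then have "(src M a, dst M a) \<in> topology M" by (auto simp: topology_def)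
  then show ?thesis using ring by (auto simp: oriented_ring_def ring_succ_def)
qed

lemma two_le_npeers: "2 \<le> N"
proof (rule ccontr)
  assume "\<not> 2 \<le> N"
  then have "N = 1" using wf by (simp add: wf_msgset_def)
  then have "(1, 1) \<in> topology M"
    using ring by (auto simp: oriented_ring_def)
  then show False using wf by (auto simp: topology_def wf_msgset_def)
qed

lemma ring_succ_range: "i \<in> {1..N} \<Longrightarrow> ring_succ M i \<in> {1..N}"
  using two_le_npeers by (simp add: ring_succ_def Suc_leI)

lemma ring_succ_neq: "i \<in> {1..N} \<Longrightarrow> ring_succ M i \<noteq> i"
  using two_le_npeers by (cases "i = N") (auto simp: ring_succ_def)

lemma ring_pred_range: "k \<in> {1..N} \<Longrightarrow> ring_pred M k \<in> {1..N}"
  using two_le_npeers by (auto simp: ring_pred_def)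

lemma ring_succ_pred: "k \<in> {1..N} \<Longrightarrow> ring_succ M (ring_pred M k) = k"
  by (cases "k = 1") (auto simp: ring_pred_def ring_succ_def)

lemma ring_pred_succ: "i \<in> {1..N} \<Longrightarrow> ring_pred M (ring_succ M i) = i"
  using two_le_npeers by (cases "i = N") (auto simp: ring_pred_def ring_succ_def)

lemma ring_pred_neq: "k \<in> {1..N} \<Longrightarrow> ring_pred M k \<noteq> k"
  by (metis ring_succ_neq ring_succ_pred ring_pred_range)

lemma dst_eq_iff: "a \<in> msgs M \<Longrightarrow> k \<in> {1..N} \<Longrightarrow> dst M a = k \<longleftrightarrow> src M a = ring_pred M k"
  by (metis msg_on_ring ring_succ_pred ring_pred_succ)

lemma dst_range: "a \<in> msgs M \<Longrightarrow> dst M a \<in> {1..N}"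
  using msg_on_ring ring_succ_range by auto

lemma actor_range: "msg_of act \<in> msgs M \<Longrightarrow> actor M act \<in> {1..N}"
  by (cases act) (use msg_on_ring dst_range in force)+

definition wf_actions :: "'m action list \<Rightarrow> bool" where
  "wf_actions \<tau> \<longleftrightarrow> (\<forall>act\<in>set \<tau>. msg_of act \<in> msgs M)"

lemma wf_actions_simps [simp]:
  "wf_actions []" "wf_actions (xs @ ys) \<longleftrightarrow> wf_actions xs \<and> wf_actions ys"
  "wf_actions (x # xs) \<longleftrightarrow> msg_of x \<in> msgs M \<and> wf_actions xs"
  by (auto simp: wf_actions_def)

lemma wf_actions_subset: "wf_actions \<tau> \<Longrightarrow> set \<tau>' \<subseteq> set \<tau> \<Longrightarrow> wf_actions \<tau>'"
  by (auto simp: wf_actions_def)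

lemma wf_actions_sync: "wf_actions (sync_actions w) \<longleftrightarrow> set w \<subseteq> msgs M"
  by (induction w) auto

lemma sends_in_msgs: "wf_actions \<tau> \<Longrightarrow> set (sends \<tau>) \<subseteq> msgs M"
  by (force simp: wf_actions_def set_sends)

lemma actions_of_outside: "wf_actions \<tau> \<Longrightarrow> i \<notin> {1..N} \<Longrightarrow> actions_of M i \<tau> = []"
  by (induction \<tau>) (use actor_range in auto)

text \<open>The only channel out of peer \<open>i\<close> leads to its successor; it holds the messages of \<open>i\<close>
  still in transit.\<close>

definition ring_channels :: "'m action list \<Rightarrow> nat \<Rightarrow> nat \<Rightarrow> 'm list" where
  "ring_channels \<tau> i j = (if j = ring_succ M i then pending_after M (\<lambda>_. []) \<tau> i else [])"

definition reached :: "'m action list \<Rightarrow> ('s, 'm) config \<Rightarrow> bool" where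
  "reached \<tau> c \<longleftrightarrow> wf_actions \<tau> \<and> fifo_from M (\<lambda>_. []) \<tau> \<and>
     (\<forall>i. peer_path (P i) (init (P i)) (actions_of M i \<tau>) (ctrl c i)) \<and> chans c = ring_channels \<tau>"

lemma ring_channels_Send:
  assumes "b \<in> msgs M" "fifo_from M (\<lambda>_. []) \<tau>"
  shows "ring_channels (\<tau> @ [Send b]) =
    (ring_channels \<tau>)(src M b := (ring_channels \<tau> (src M b))(dst M b := ring_channels \<tau> (src M b) (dst M b) @ [b]))"
  using assms msg_on_ring[OF assms(1)]
  by (auto simp: ring_channels_def pending_after_append pending_after_Send fun_eq_iff)

lemma ring_channels_Recv:
  assumes "b \<in> msgs M" "fifo_from M (\<lambda>_. []) \<tau>" "ring_channels \<tau> (src M b) (dst M b) = b # w"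
  shows "ring_channels (\<tau> @ [Recv b]) = (ring_channels \<tau>)(src M b := (ring_channels \<tau> (src M b))(dst M b := w))"
  using assms msg_on_ring[OF assms(1)]
  by (auto simp: ring_channels_def pending_after_append pending_after_Recv fun_eq_iff)

lemma reached_Nil: "reached [] c \<longleftrightarrow> c = init_config P"
  by (cases c) (auto simp: reached_def init_config_def ring_channels_def fun_eq_iff)

lemma reached_snoc_step:
  assumes "reached \<tau> c'" "step M P c' act c"
  shows "reached (\<tau> @ [act]) c"
  using assms(2)
proof cases
  case (send b i j q')
  with assms(1) show ?thesis
    by (auto simp: reached_def fifo_from_append fifo_from_Send ring_channels_Send peer_path_snoc)
next
  case (recv b i j w q')
  then have "j = ring_succ M i" "pending_after M (\<lambda>_. []) \<tau> i = b # w"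
    using assms(1) by (auto simp: reached_def ring_channels_def split: if_splits)
  with recv assms(1) show ?thesis
    by (auto simp: reached_def fifo_from_append fifo_from_Recv ring_channels_Recv peer_path_snoc)
qed

lemma step_to_reached:
  assumes reached: "reached (\<tau> @ [act]) c" and q: "(q, act, ctrl c (actor M act)) \<in> trans (P (actor M act))"
  shows "step M P \<lparr>ctrl = (ctrl c)(actor M act := q), chans = ring_channels \<tau>\<rparr> act c"
proof -
  define c' where "c' = \<lparr>ctrl = (ctrl c)(actor M act := q), chans = ring_channels \<tau>\<rparr>"
  have wf_act: "msg_of act \<in> msgs M" and fifo: "fifo_from M (\<lambda>_. []) \<tau>"
    and fifo_act: "fifo_from M (pending_after M (\<lambda>_. []) \<tau>) [act]"
    using reached by (auto simp: reached_def fifo_from_append)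
  show ?thesis
    unfolding c'_def[symmetric]
  proof (cases act)
    case (Send b)
    have "step M P c' (Send b) \<lparr>ctrl = (ctrl c')(src M b := ctrl c (src M b)),
        chans = (chans c')(src M b := (chans c' (src M b))(dst M b := chans c' (src M b) (dst M b) @ [b]))\<rparr>"
      using Send wf_act q by (intro step.send) (auto simp: c'_def)
    moreover have "\<lparr>ctrl = (ctrl c')(src M b := ctrl c (src M b)),
        chans = (chans c')(src M b := (chans c' (src M b))(dst M b := chans c' (src M b) (dst M b) @ [b]))\<rparr> = c"
      using reached Send wf_act fifo by (auto simp: c'_def reached_def ring_channels_Send intro: config.equality)
    ultimately show "step M P c' act c" using Send by simp
  next
    case (Recv b)
    obtain w where "pending_after M (\<lambda>_. []) \<tau> (src M b) = b # w"
      using fifo_act Recv by (auto simp: fifo_from_Recv)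
    then have chan: "chans c' (src M b) (dst M b) = b # w"
      using Recv wf_act msg_on_ring by (simp add: c'_def ring_channels_def)
    have "step M P c' (Recv b) \<lparr>ctrl = (ctrl c')(dst M b := ctrl c (dst M b)),
        chans = (chans c')(src M b := (chans c' (src M b))(dst M b := w))\<rparr>"
      using Recv wf_act q chan by (intro step.recv[where i = "src M b"]) (auto simp: c'_def)
    moreover have "\<lparr>ctrl = (ctrl c')(dst M b := ctrl c (dst M b)),
        chans = (chans c')(src M b := (chans c' (src M b))(dst M b := w))\<rparr> = c"
      using reached Recv wf_act fifo chan by (auto simp: c'_def reached_def ring_channels_Recv intro: config.equality)
    ultimately show "step M P c' act c" using Recv by simp
  qed
qed

lemma reached_snocE:
  assumes "reached (\<tau> @ [act]) c"
  obtains c' where "reached \<tau> c'" "step M P c' act c"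
proof -
  define i where "i = actor M act"
  have paths: "peer_path (P j) (init (P j)) (actions_of M j (\<tau> @ [act])) (ctrl c j)" for j
    using assms unfolding reached_def by blast
  then have "peer_path (P i) (init (P i)) (actions_of M i \<tau> @ [act]) (ctrl c i)"
    using paths[of i] by (simp add: i_def)
  then obtain q where q: "peer_path (P i) (init (P i)) (actions_of M i \<tau>) q" "(q, act, ctrl c i) \<in> trans (P i)"
    by (auto simp: peer_path_snoc)
  have "peer_path (P j) (init (P j)) (actions_of M j \<tau>) (((ctrl c)(i := q)) j)" for j
    using paths[of j] q by (auto simp: i_def)
  then have "reached \<tau> \<lparr>ctrl = (ctrl c)(i := q), chans = ring_channels \<tau>\<rparr>"
    using assms by (simp add: reached_def fifo_from_append)
  then show ?thesis
    using that step_to_reached[OF assms q(2)[unfolded i_def]] by (simp add: i_def)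
qed

theorem run_iff_reached: "run M P (init_config P) \<tau> c \<longleftrightarrow> reached \<tau> c"
proof (induction \<tau> arbitrary: c rule: rev_induct)
  case Nil
  then show ?case by (simp add: run_Nil reached_Nil eq_commute)
next
  case (snoc act \<tau>)
  then show ?case
    by (metis reached_snocE reached_snoc_step run_snoc)
qed

section \<open>Synchronous and 1-bounded runs\<close>

definition sync_sends :: "'m list \<Rightarrow> bool" where
  "sync_sends w \<longleftrightarrow> (\<exists>\<sigma> c. synchronous_trace \<sigma> \<and> run M P (init_config P) \<sigma> c \<and> sends \<sigma> = w)"

lemma fifo1_segment_sync_empty: "fifo1_segment M (\<lambda>_. []) (sync_actions w) (\<lambda>_. [])"
  by (simp add: fifo1_segment_sync)

lemma run_sync_iff:
  "run M P (init_config P) (sync_actions w) c \<longleftrightarrow>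
     set w \<subseteq> msgs M \<and> (\<forall>i. peer_path (P i) (init (P i)) (sync_view M i w) (ctrl c i)) \<and> chans c = (\<lambda>i j. [])"
  using fifo1_segment_sync_empty[of w]
  by (auto simp: run_iff_reached reached_def wf_actions_sync ring_channels_def fifo1_segment_def fun_eq_iff)

lemma sync_sends_iff: "sync_sends w \<longleftrightarrow> set w \<subseteq> msgs M \<and> (\<forall>i. \<exists>q. peer_path (P i) (init (P i)) (sync_view M i w) q)"
proof
  assume "sync_sends w"
  then obtain \<sigma> c where "synchronous_trace \<sigma>" "run M P (init_config P) \<sigma> c" "sends \<sigma> = w"
    by (auto simp: sync_sends_def)
  then have "run M P (init_config P) (sync_actions w) c"
    by (metis synchronous_trace_iff)
  then show "set w \<subseteq> msgs M \<and> (\<forall>i. \<exists>q. peer_path (P i) (init (P i)) (sync_view M i w) q)"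
    by (auto simp: run_sync_iff)
next
  assume "set w \<subseteq> msgs M \<and> (\<forall>i. \<exists>q. peer_path (P i) (init (P i)) (sync_view M i w) q)"
  then have "run M P (init_config P) (sync_actions w)
      \<lparr>ctrl = \<lambda>i. SOME q. peer_path (P i) (init (P i)) (sync_view M i w) q, chans = \<lambda>i j. []\<rparr>"
    by (auto simp: run_sync_iff intro: someI_ex)
  moreover have "synchronous_trace (sync_actions w)"
    by (simp add: synchronous_trace_iff)
  ultimately show "sync_sends w"
    unfolding sync_sends_def by (metis sends_sync_actions)
qed

lemma sync_sends_Nil: "sync_sends []"
  by (simp add: sync_sends_iff)

lemma sent_on_ring: "wf_actions \<tau> \<Longrightarrow> sent_on M i j \<tau> = (if j = ring_succ M i then sent_by M i \<tau> else [])"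
  by (induction \<tau>) (auto simp: sent_on_def msg_on_ring split: action.split)

lemma recv_on_ring: "wf_actions \<tau> \<Longrightarrow> recv_on M i j \<tau> = (if j = ring_succ M i then recvd_from M i \<tau> else [])"
  by (induction \<tau>) (auto simp: recv_on_def msg_on_ring split: action.split)

lemma bounded_fifo_traceI:
  assumes "wf_actions \<tau>" "fifo_from M (\<lambda>_. []) \<tau>" "bounded_from M K (\<lambda>_. []) \<tau>"
  shows "bounded_fifo_trace M K \<tau>"
  unfolding bounded_fifo_trace_def
proof (intro allI impI)
  fix n i j
  let ?\<sigma> = "take n \<tau>"
  have wf: "wf_actions ?\<sigma>"
    using assms(1) by (auto simp: wf_actions_def dest: in_set_takeD)
  have "prefix (recvd_from M i ?\<sigma>) (sent_by M i ?\<sigma>)"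
    using assms(2) take_is_prefix unfolding fifo_from_def by fastforce
  then have "sent_by M i ?\<sigma> = recvd_from M i ?\<sigma> @ pending_after M (\<lambda>_. []) ?\<sigma> i"
    by (auto simp: pending_after_def prefix_def)
  moreover have "length (pending_after M (\<lambda>_. []) ?\<sigma> i) \<le> K"
    using assms(3) take_is_prefix unfolding bounded_from_def by blast
  ultimately show "\<exists>w. is_buf M i j ?\<sigma> w \<and> length w \<le> K"
    using wf by (auto simp: is_buf_def sent_on_ring recv_on_ring)
qed

lemma run_of_fifo1_segment:
  assumes "fifo1_segment M (\<lambda>_. []) \<Theta> Q" "wf_actions \<Theta>"
    and "\<forall>i. peer_path (P i) (init (P i)) (actions_of M i \<Theta>) (f i)"
  shows "run M P (init_config P) \<Theta> \<lparr>ctrl = f, chans = \<lambda>i j. if j = ring_succ M i then Q i else []\<rparr>"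
    and "bounded_fifo_trace M 1 \<Theta>"
  using assms bounded_fifo_traceI
  by (auto simp: fifo1_segment_def run_iff_reached reached_def ring_channels_def fun_eq_iff)

lemma run_of_sync_others:
  assumes "sync_sends W" "fifo1_segment M (\<lambda>_. []) \<Theta> Q" "wf_actions \<Theta>"
    and "\<forall>i. i \<noteq> k \<longrightarrow> actions_of M i \<Theta> = sync_view M i W"
    and "peer_path (P k) (init (P k)) (actions_of M k \<Theta>) e"
  shows "\<exists>c. run M P (init_config P) \<Theta> c \<and> bounded_fifo_trace M 1 \<Theta> \<and> ctrl c k = e \<and>
           chans c = (\<lambda>i j. if j = ring_succ M i then Q i else [])"
proof -
  define f where "f i = (if i = k then e else SOME q. peer_path (P i) (init (P i)) (sync_view M i W) q)" for i
  have "\<forall>i. peer_path (P i) (init (P i)) (actions_of M i \<Theta>) (f i)"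
    using assms(1,4,5) by (auto simp: f_def sync_sends_iff intro: someI_ex)
  then show ?thesis
    using run_of_fifo1_segment[OF assms(2,3)] by (fastforce simp: f_def)
qed

lemma traces_0_subset_1: "traces M P 0 \<subseteq> traces M P 1"
proof
  fix \<tau> assume "\<tau> \<in> traces M P 0"
  then obtain c where "\<tau> = sync_actions (sends \<tau>)" "run M P (init_config P) \<tau> c"
    by (auto simp: traces_def synchronous_trace_iff)
  moreover from this have "bounded_fifo_trace M 1 \<tau>"
    using fifo1_segment_sync_empty[of "sends \<tau>"] bounded_fifo_traceI
    by (metis fifo1_segment_def reached_def run_iff_reached)
  ultimately show "\<tau> \<in> traces M P 1"
    by (auto simp: traces_def)
qed

lemma ST_0_subset_1: "ST M P 0 \<subseteq> ST M P 1"
  unfolding ST_def send_traces_def using traces_0_subset_1 by blast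

lemma ST_1_subset_omega: "ST M P 1 \<subseteq> ST_omega M P"
  unfolding ST_def ST_omega_def send_traces_def traces_omega_def by blast

lemma sync_view_silent:
  assumes "k \<in> {1..N}" "set \<beta> \<subseteq> msgs M" "\<forall>b\<in>set \<beta>. src M b \<noteq> ring_pred M k \<and> src M b \<noteq> k"
  shows "sync_view M k \<beta> = []"
  using assms by (induction \<beta>) (auto simp: dst_eq_iff)

lemma late_receive_run:
  assumes k: "k \<in> {1..N}" and p: "p = ring_pred M k"
    and W: "W = \<alpha> @ [m] @ \<beta> @ [y] @ \<gamma>" and sync: "sync_sends W"
    and m: "src M m = p" and y: "src M y = k" and \<beta>: "\<forall>b\<in>set \<beta>. src M b \<noteq> p \<and> src M b \<noteq> k"
    and path: "peer_path (P k) (init (P k)) (sync_view M k (\<alpha> @ \<beta> @ [y, m] @ \<gamma>) @ \<zeta>) e"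
    and \<zeta>: "\<zeta> = [] \<or> (\<exists>x. \<zeta> = [Send x] \<and> x \<in> msgs M \<and> src M x = k)"
  shows "\<exists>\<Theta> c. run M P (init_config P) \<Theta> c \<and> bounded_fifo_trace M 1 \<Theta> \<and> sends \<Theta> = W @ sends \<zeta> \<and>
           ctrl c k = e \<and> (\<zeta> = [] \<longrightarrow> chans c = (\<lambda>i j. []))"
proof -
  define \<Theta> where "\<Theta> = sync_actions \<alpha> @ [Send m] @ sync_actions \<beta> @ [Send y, Recv y, Recv m] @ sync_actions \<gamma> @ \<zeta>"
  define Q :: "nat \<Rightarrow> 'm list" where "Q = (if \<zeta> = [] then (\<lambda>_. []) else (\<lambda>_. [])(k := sends \<zeta>))"
  have msgs: "set W \<subseteq> msgs M" using sync by (simp add: sync_sends_iff)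
  have kp: "k \<noteq> p" using ring_pred_neq[OF k] p by simp
  have dst_m: "dst M m = k" using dst_eq_iff[OF _ k] msgs W m p by simp
  have dst_y: "dst M y \<noteq> k" using msg_on_ring ring_succ_neq[OF k] msgs W y by auto
  have seg: "fifo1_segment M (\<lambda>_. []) \<Theta> Q"
    unfolding \<Theta>_def Q_def using fifo1_segment_late_receive[OF m y kp \<beta>] \<zeta> by blast
  have wf: "wf_actions \<Theta>"
    using msgs W \<zeta> by (auto simp: \<Theta>_def wf_actions_sync)
  have "actions_of M k \<Theta> = sync_view M k (\<alpha> @ \<beta> @ [y, m] @ \<gamma>) @ \<zeta>"
    using \<zeta> m y kp dst_m dst_y sync_view_silent[OF k, of \<beta>] msgs W \<beta> p by (auto simp: \<Theta>_def)
  then have path': "peer_path (P k) (init (P k)) (actions_of M k \<Theta>) e"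
    using path by simp
  have "\<forall>i. i \<noteq> k \<longrightarrow> actions_of M i \<Theta> = sync_view M i W"
    using \<zeta> m y dst_m by (auto simp: \<Theta>_def W)
  then obtain c where "run M P (init_config P) \<Theta> c" "bounded_fifo_trace M 1 \<Theta>" "ctrl c k = e"
    "chans c = (\<lambda>i j. if j = ring_succ M i then Q i else [])"
    using run_of_sync_others[OF sync seg wf _ path'] by blast
  moreover have "sends \<Theta> = W @ sends \<zeta>"
    by (simp add: \<Theta>_def W)
  moreover have "\<zeta> = [] \<Longrightarrow> Q = (\<lambda>_. [])"
    by (simp add: Q_def)
  ultimately show ?thesis
    by (intro exI[of _ \<Theta>] exI[of _ c]) auto
qed

text \<open>The run built here exchanges the messages of \<open>W\<close> synchronously, except that \<open>m\<close> is
  never received and \<open>x\<close> stays in transit.\<close>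

lemma undelivered_send_run:
  assumes k: "k \<in> {1..N}" and p: "p = ring_pred M k"
    and W: "W = \<alpha> @ [m] @ \<gamma>" and sync: "sync_sends W"
    and m: "src M m = p" and \<gamma>: "\<forall>b\<in>set \<gamma>. src M b \<noteq> p"
    and x: "x \<in> msgs M" "src M x = k"
    and path: "peer_path (P k) (init (P k)) (sync_view M k (\<alpha> @ \<gamma>) @ [Send x]) e"
  shows "\<exists>\<Theta> c. run M P (init_config P) \<Theta> c \<and> bounded_fifo_trace M 1 \<Theta> \<and> sends \<Theta> = W @ [x]"
proof -
  define E :: "nat \<Rightarrow> 'm list" where "E = (\<lambda>_. [])"
  define E1 where "E1 = E(p := [m])"
  define \<Theta> where "\<Theta> = sync_actions \<alpha> @ [Send m] @ sync_actions \<gamma> @ [Send x]"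
  have msgs: "set W \<subseteq> msgs M" using sync by (simp add: sync_sends_iff)
  have kp: "k \<noteq> p" using ring_pred_neq[OF k] p by simp
  have dst_m: "dst M m = k" using dst_eq_iff[OF _ k] msgs W m p by simp
  have "fifo1_segment M E (sync_actions \<alpha>) E" "fifo1_segment M E1 (sync_actions \<gamma>) E1"
    using \<gamma> by (auto simp: E1_def E_def intro!: fifo1_segment_sync)
  moreover have "fifo1_segment M E [Send m] E1"
    using fifo1_segment_Send[of E M m] m by (simp add: E1_def E_def)
  moreover have "fifo1_segment M E1 [Send x] (E1(k := [x]))"
    using fifo1_segment_Send[of E1 M x] x kp by (simp add: E1_def E_def)
  ultimately have seg: "fifo1_segment M (\<lambda>_. []) \<Theta> (E1(k := [x]))"
    unfolding \<Theta>_def E_def[symmetric] by (metis fifo1_segment_append)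
  have wf: "wf_actions \<Theta>"
    using msgs W x by (auto simp: \<Theta>_def wf_actions_sync)
  have "actions_of M k \<Theta> = sync_view M k (\<alpha> @ \<gamma>) @ [Send x]"
    using m x kp dst_m by (auto simp: \<Theta>_def)
  then have path': "peer_path (P k) (init (P k)) (actions_of M k \<Theta>) e"
    using path by simp
  have "\<forall>i. i \<noteq> k \<longrightarrow> actions_of M i \<Theta> = sync_view M i W"
    using m x dst_m by (auto simp: \<Theta>_def W)
  then obtain c where "run M P (init_config P) \<Theta> c" "bounded_fifo_trace M 1 \<Theta>"
    using run_of_sync_others[OF sync seg wf _ path'] by blast
  moreover have "sends \<Theta> = W @ [x]"
    by (simp add: \<Theta>_def W)
  ultimately show ?thesis by blast
qed

lemma sync_then_send_run:
  assumes k: "k \<in> {1..N}" and sync: "sync_sends W" and x: "x \<in> msgs M" "src M x = k"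
    and path: "peer_path (P k) (init (P k)) (sync_view M k W @ [Send x]) e"
  shows "\<exists>\<Theta> c. run M P (init_config P) \<Theta> c \<and> bounded_fifo_trace M 1 \<Theta> \<and> sends \<Theta> = W @ [x]"
proof -
  define \<Theta> where "\<Theta> = sync_actions W @ [Send x]"
  have seg: "fifo1_segment M (\<lambda>_. []) \<Theta> ((\<lambda>_. [])(k := [x]))"
    unfolding \<Theta>_def using fifo1_segment_sync_empty fifo1_segment_Send[of "\<lambda>_. []" M x] x
    by (fastforce intro: fifo1_segment_append)
  have wf: "wf_actions \<Theta>"
    using sync x by (auto simp: \<Theta>_def wf_actions_sync sync_sends_iff)
  have path': "peer_path (P k) (init (P k)) (actions_of M k \<Theta>) e"
    using path x by (simp add: \<Theta>_def)
  have "\<forall>i. i \<noteq> k \<longrightarrow> actions_of M i \<Theta> = sync_view M i W"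
    using x by (auto simp: \<Theta>_def)
  then obtain c where "run M P (init_config P) \<Theta> c" "bounded_fifo_trace M 1 \<Theta>"
    using run_of_sync_others[OF sync seg wf _ path'] by blast
  moreover have "sends \<Theta> = W @ [x]"
    by (simp add: \<Theta>_def)
  ultimately show ?thesis by blast
qed

section \<open>Rearranging runs\<close>

lemma recvd_from_filter_not_actor:
  "wf_actions \<rho> \<Longrightarrow>
   recvd_from M i (filter (\<lambda>act. actor M act \<noteq> p) \<rho>) = (if ring_succ M i = p then [] else recvd_from M i \<rho>)"
proof (induction \<rho>)
  case (Cons act \<rho>) then show ?case by (cases act) (auto simp: msg_on_ring)
qed simp

lemma recvd_from_filter_actor:
  "wf_actions \<rho> \<Longrightarrow>
   recvd_from M i (filter (\<lambda>act. actor M act = p) \<rho>) = (if ring_succ M i = p then recvd_from M i \<rho> else [])"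
proof (induction \<rho>)
  case (Cons act \<rho>) then show ?case by (cases act) (auto simp: msg_on_ring)
qed simp

lemma fifo_from_filter_actor:
  assumes fifo: "fifo_from M Q \<rho>" and wf: "wf_actions \<rho>" and p: "p \<in> {1..N}"
    and Q0: "prefix Q0 (Q p)" and len: "length (recvd_from M p \<rho>) \<le> length Q0"
  shows "fifo_from M (Q(p := Q0)) (filter (\<lambda>act. actor M act \<noteq> p) \<rho>)"
  unfolding fifo_from_def
proof (intro allI impI)
  fix \<sigma> i assume "prefix \<sigma> (filter (\<lambda>act. actor M act \<noteq> p) \<rho>)"
  then obtain \<sigma>' where \<sigma>': "prefix \<sigma>' \<rho>" "\<sigma> = filter (\<lambda>act. actor M act \<noteq> p) \<sigma>'"
    using prefix_filter_ex by blast
  have wf': "wf_actions \<sigma>'"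
    using wf \<sigma>'(1) wf_actions_subset set_mono_prefix by blast
  have fifo': "prefix (recvd_from M i \<sigma>') (Q i @ sent_by M i \<sigma>')"
    using fifo \<sigma>'(1) by (simp add: fifo_from_def)
  consider "ring_succ M i = p" | "i = p" | "ring_succ M i \<noteq> p" "i \<noteq> p" by blast
  then show "prefix (recvd_from M i \<sigma>) ((Q(p := Q0)) i @ sent_by M i \<sigma>)"
  proof cases
    case 2
    have "length (recvd_from M p \<sigma>') \<le> length Q0"
      using len prefix_length_le[OF prefix_recvd_from[OF \<sigma>'(1)]] by (meson order_trans)
    then have "prefix (recvd_from M p \<sigma>') Q0"
      using fifo' Q0 2 by (metis prefix_length_prefix prefix_prefix)
    then show ?thesis
      using 2 ring_succ_neq[OF p] by (simp add: \<sigma>'(2) recvd_from_filter_not_actor[OF wf'] sent_by_filter_not_actor)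
  qed (use fifo' in \<open>simp_all add: \<sigma>'(2) recvd_from_filter_not_actor[OF wf'] sent_by_filter_not_actor\<close>)
qed

lemma fifo_remove_undelivered:
  assumes fifo: "fifo_from M (\<lambda>_. []) (\<rho>1 @ [Send m] @ \<rho>2)" and wf: "wf_actions \<rho>2"
    and m: "src M m = p" and p: "p \<in> {1..N}"
    and undelivered: "length (recvd_from M p (\<rho>1 @ \<rho>2)) \<le> length (sent_by M p \<rho>1)"
  shows "fifo_from M (\<lambda>_. []) (\<rho>1 @ filter (\<lambda>act. actor M act \<noteq> p) \<rho>2)"
proof -
  define Q where "Q = pending_after M (\<lambda>_. []) \<rho>1"
  have fifo1: "fifo_from M (\<lambda>_. []) \<rho>1" and fifo2: "fifo_from M (Q(p := Q p @ [m])) \<rho>2"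
    using fifo m by (simp_all add: fifo_from_append fifo_from_Cons_Send fifo_from_Send pending_after_Send Q_def)
  have "length (recvd_from M p \<rho>2) \<le> length (Q p)"
    using undelivered by (simp add: Q_def pending_after_def)
  then have "fifo_from M Q (filter (\<lambda>act. actor M act \<noteq> p) \<rho>2)"
    using fifo_from_filter_actor[OF fifo2 wf p, of "Q p"] by simp
  then show ?thesis
    using fifo1 by (simp add: fifo_from_append Q_def)
qed

lemma run_remove_undelivered:
  assumes run: "run M P (init_config P) (\<rho>1 @ [Send m] @ \<rho>2) c" and m: "src M m = p"
    and undelivered: "length (recvd_from M p (\<rho>1 @ \<rho>2)) \<le> length (sent_by M p \<rho>1)"
  shows "\<exists>c'. run M P (init_config P) (\<rho>1 @ filter (\<lambda>act. actor M act \<noteq> p) \<rho>2) c'"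
proof -
  let ?A = "filter (\<lambda>act. actor M act \<noteq> p) \<rho>2"
  have reached: "reached (\<rho>1 @ [Send m] @ \<rho>2) c"
    using run run_iff_reached by blast
  then have wf: "wf_actions (\<rho>1 @ [Send m] @ \<rho>2)"
    by (simp add: reached_def)
  then have p: "p \<in> {1..N}"
    using m msg_on_ring by auto
  have fifo: "fifo_from M (\<lambda>_. []) (\<rho>1 @ ?A)"
    using fifo_remove_undelivered[OF _ _ m p undelivered] reached wf by (simp add: reached_def)
  have paths: "peer_path (P i) (init (P i)) (actions_of M i (\<rho>1 @ [Send m] @ \<rho>2)) (ctrl c i)" for i
    using reached unfolding reached_def by blast
  then obtain q where q: "peer_path (P p) (init (P p)) (actions_of M p \<rho>1) q"
    using paths[of p] by (auto simp: peer_path_append)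
  have "peer_path (P i) (init (P i)) (actions_of M i (\<rho>1 @ ?A)) (((ctrl c)(p := q)) i)" for i
    using paths[of i] q m by (cases "i = p") (auto simp: actions_of_filter_actor)
  then have "reached (\<rho>1 @ ?A) \<lparr>ctrl = (ctrl c)(p := q), chans = ring_channels (\<rho>1 @ ?A)\<rparr>"
    using wf fifo by (auto simp: reached_def wf_actions_def)
  then show ?thesis
    using run_iff_reached by blast
qed

lemma swap_sends_counts:
  assumes wf: "wf_actions \<beta>" and p: "p \<in> {1..N}" and m: "src M m = p" and y: "src M y = ring_succ M p"
    and \<beta>: "\<forall>a. Send a \<in> set \<beta> \<longrightarrow> src M a \<noteq> p \<and> src M a \<noteq> ring_succ M p"
  shows "sent_by M i (\<alpha> @ filter (\<lambda>act. actor M act \<noteq> p) \<beta> @ [Send y, Send m] @ filter (\<lambda>act. actor M act = p) \<beta> @ \<gamma>)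
      = sent_by M i (\<alpha> @ [Send m] @ \<beta> @ [Send y] @ \<gamma>)" (is "?S")
    and "recvd_from M i (\<alpha> @ filter (\<lambda>act. actor M act \<noteq> p) \<beta> @ [Send y, Send m] @ filter (\<lambda>act. actor M act = p) \<beta> @ \<gamma>)
      = recvd_from M i (\<alpha> @ [Send m] @ \<beta> @ [Send y] @ \<gamma>)" (is "?R")
proof -
  have "sent_by M p \<beta> = []" "sent_by M (ring_succ M p) \<beta> = []"
    using \<beta> by (auto intro: sent_by_eq_Nil)
  then show ?S
    using m y ring_succ_neq[OF p] by (auto simp: sent_by_filter_not_actor sent_by_filter_actor)
  show ?R
    by (simp add: recvd_from_filter_not_actor[OF wf] recvd_from_filter_actor[OF wf])
qed

text \<open>The actions of \<open>p\<close> between its undelivered send \<open>m\<close> and a later point only receive from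
  the predecessor of \<open>p\<close>, so they can be postponed past any actions \<open>Y\<close> that receive nothing
  from it.\<close>

lemma fifo_from_postponed_recvs:
  assumes fifo: "fifo_from M (\<lambda>_. []) (\<tau>1 @ [Send m] @ \<tau>2)" and wf: "wf_actions \<tau>2"
    and p: "p \<in> {1..N}" and m: "src M m = p" and no_p: "\<forall>a. Send a \<in> set \<tau>2 \<longrightarrow> src M a \<noteq> p"
    and Y: "recvd_from M (ring_pred M p) Y = []"
  shows "fifo_from M (pending_after M (\<lambda>_. []) (\<tau>1 @ filter (\<lambda>act. actor M act \<noteq> p) \<tau>2 @ Y))
           (filter (\<lambda>act. actor M act = p) \<tau>2)"
proof (rule fifo_from_recvs)
  let ?o = "ring_pred M p"
  have o: "ring_succ M ?o = p" "?o \<noteq> p"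
    using ring_succ_pred[OF p] ring_pred_neq[OF p] by auto
  have "prefix (recvd_from M ?o (\<tau>1 @ \<tau>2)) (sent_by M ?o (\<tau>1 @ \<tau>2))"
    using fifo_fromD[OF fifo, of ?o] m o by simp
  moreover have len: "length (recvd_from M ?o \<tau>1) \<le> length (sent_by M ?o \<tau>1)"
    using fifo fifo_fromD[of M "\<lambda>_. []" \<tau>1 ?o] prefix_length_le by (fastforce simp: fifo_from_append)
  ultimately have "prefix (recvd_from M ?o \<tau>2)
      (drop (length (recvd_from M ?o \<tau>1)) (sent_by M ?o \<tau>1 @ sent_by M ?o \<tau>2) @ sent_by M ?o Y)"
    using prefix_drop_append prefix_prefix by (metis recvd_from_simps(2) sent_by_simps(2))
  moreover have "pending_after M (\<lambda>_. []) (\<tau>1 @ filter (\<lambda>act. actor M act \<noteq> p) \<tau>2 @ Y) ?o =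
      drop (length (recvd_from M ?o \<tau>1)) (sent_by M ?o \<tau>1 @ sent_by M ?o \<tau>2) @ sent_by M ?o Y"
    using o len Y by (simp add: pending_after_def recvd_from_filter_not_actor[OF wf] sent_by_filter_not_actor)
  moreover have "recvd_from M ?o (filter (\<lambda>act. actor M act = p) \<tau>2) = recvd_from M ?o \<tau>2"
    using o by (simp add: recvd_from_filter_actor[OF wf])
  ultimately show "prefix (recvd_from M ?o (filter (\<lambda>act. actor M act = p) \<tau>2))
      (pending_after M (\<lambda>_. []) (\<tau>1 @ filter (\<lambda>act. actor M act \<noteq> p) \<tau>2 @ Y) ?o)"
    by simp
  show "\<forall>act\<in>set (filter (\<lambda>act. actor M act = p) \<tau>2). \<exists>a. act = Recv a \<and> src M a = ?o"
  proof
    fix act assume "act \<in> set (filter (\<lambda>act. actor M act = p) \<tau>2)"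
    then have act: "act \<in> set \<tau>2" "actor M act = p" by auto
    show "\<exists>a. act = Recv a \<and> src M a = ?o"
    proof (cases act)
      case (Send a)
      then show ?thesis using no_p act by auto
    next
      case (Recv a)
      then have "a \<in> msgs M" using wf act by (auto simp: wf_actions_def)
      then show ?thesis using Recv act dst_eq_iff[OF _ p] by auto
    qed
  qed
qed

text \<open>If \<open>succ p\<close> sends \<open>y\<close> while the message \<open>m\<close> of \<open>p\<close> is still in transit, the
  actions of \<open>p\<close> in between can be postponed and \<open>y\<close> can be sent before \<open>m\<close>: no peer
  notices the difference.\<close>

lemma run_swap_sends:
  assumes run: "run M P (init_config P) (\<tau>1 @ [Send m] @ \<tau>2 @ [Send y] @ \<tau>3) c"
    and m: "src M m = p" and y: "src M y = ring_succ M p"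
    and \<tau>2: "\<forall>a. Send a \<in> set \<tau>2 \<longrightarrow> src M a \<noteq> p \<and> src M a \<noteq> ring_succ M p"
    and undelivered: "length (recvd_from M p (\<tau>1 @ \<tau>2)) \<le> length (sent_by M p \<tau>1)"
  shows "run M P (init_config P)
           (\<tau>1 @ filter (\<lambda>act. actor M act \<noteq> p) \<tau>2 @ [Send y, Send m] @ filter (\<lambda>act. actor M act = p) \<tau>2 @ \<tau>3) c"
proof -
  let ?X = "\<tau>1 @ filter (\<lambda>act. actor M act \<noteq> p) \<tau>2 @ [Send y, Send m]"
  let ?B = "filter (\<lambda>act. actor M act = p) \<tau>2"
  let ?\<tau> = "\<tau>1 @ [Send m] @ \<tau>2 @ [Send y] @ \<tau>3"
  have reached: "reached ?\<tau> c"
    using run run_iff_reached by blast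
  then have wf: "wf_actions ?\<tau>" and fifo: "fifo_from M (\<lambda>_. []) ?\<tau>"
    by (simp_all add: reached_def)
  then have wf2: "wf_actions \<tau>2" and p: "p \<in> {1..N}"
    using m msg_on_ring by auto
  have fifo_m2: "fifo_from M (\<lambda>_. []) (\<tau>1 @ [Send m] @ \<tau>2)"
    using fifo by (simp add: fifo_from_append fifo_from_Cons_Send)
  then have "fifo_from M (\<lambda>_. []) ?X"
    using fifo_remove_undelivered[OF _ wf2 m p undelivered]
    by (simp add: fifo_from_append fifo_from_Cons_Send flip: append_assoc)
  moreover have "fifo_from M (pending_after M (\<lambda>_. []) ?X) ?B"
    using fifo_from_postponed_recvs[OF fifo_m2 wf2 p m, of "[Send y, Send m]"] \<tau>2 by simp
  moreover have "fifo_from M (pending_after M (\<lambda>_. []) (\<tau>1 @ [Send m] @ \<tau>2 @ [Send y])) \<tau>3"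
    using fifo fifo_from_append[of M "\<lambda>_. []" "\<tau>1 @ [Send m] @ \<tau>2 @ [Send y]" \<tau>3] by simp
  then have "fifo_from M (pending_after M (\<lambda>_. []) (?X @ ?B)) \<tau>3"
    using pending_after_cong[of M "?X @ ?B" "\<tau>1 @ [Send m] @ \<tau>2 @ [Send y]"] swap_sends_counts[OF wf2 p m y \<tau>2, where \<gamma> = "[]"] by simp
  ultimately have "fifo_from M (\<lambda>_. []) (?X @ ?B @ \<tau>3)"
    using fifo_from_append[of M "\<lambda>_. []" ?X ?B] fifo_from_append[of M "\<lambda>_. []" "?X @ ?B" \<tau>3] by simp
  moreover have "ring_channels (?X @ ?B @ \<tau>3) = ring_channels ?\<tau>"
    using pending_after_cong[of M "?X @ ?B @ \<tau>3" ?\<tau>] swap_sends_counts[OF wf2 p m y \<tau>2] by (simp add: ring_channels_def fun_eq_iff)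
  moreover have "actions_of M i (?X @ ?B @ \<tau>3) = actions_of M i ?\<tau>" for i
    using actions_of_swap_sends[OF m y ring_succ_neq[OF p]] by simp
  moreover have "wf_actions (?X @ ?B @ \<tau>3)"
    using wf by (auto simp: wf_actions_def)
  ultimately have "reached (?X @ ?B @ \<tau>3) c"
    using reached by (simp add: reached_def)
  then show ?thesis
    using run_iff_reached by simp
qed

lemma sync_view_eq_actions_of:
  assumes k: "k \<in> {1..N}" and p: "p = ring_pred M k"
    and wf: "wf_actions \<tau>" and fifo: "fifo_from M (\<lambda>_. []) \<tau>"
    and empty: "\<forall>\<rho> y. prefix (\<rho> @ [Send y]) \<tau> \<longrightarrow> src M y = k \<longrightarrow> pending_after M (\<lambda>_. []) \<rho> p = []"
  shows "sync_view M k (sends \<tau>) = actions_of M k \<tau> @ map Recv (pending_after M (\<lambda>_. []) \<tau> p)"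
  using wf fifo empty
proof (induction \<tau> rule: rev_induct)
  case (snoc act \<tau>)
  have wf: "wf_actions \<tau>" "msg_of act \<in> msgs M" and fifo: "fifo_from M (\<lambda>_. []) \<tau>"
    using snoc.prems(1,2) by (auto simp: fifo_from_append)
  have IH: "sync_view M k (sends \<tau>) = actions_of M k \<tau> @ map Recv (pending_after M (\<lambda>_. []) \<tau> p)"
    using snoc.IH wf fifo snoc.prems(3) by (meson prefix_order.trans prefix_prefix)
  have kp: "k \<noteq> p" using ring_pred_neq[OF k] p by auto
  show ?case
  proof (cases act)
    case (Send b)
    have dst: "dst M b = k \<longleftrightarrow> src M b = p" using dst_eq_iff[OF _ k] wf Send p by simp
    have "src M b = k \<Longrightarrow> pending_after M (\<lambda>_. []) \<tau> p = []"
      using snoc.prems(3) Send by blast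
    then show ?thesis
      using IH Send dst kp fifo
      by (auto simp: pending_after_append pending_after_Send)
  next
    case (Recv b)
    have dst: "dst M b = k \<longleftrightarrow> src M b = p" using dst_eq_iff[OF _ k] wf Recv p by simp
    show ?thesis
    proof (cases "src M b = p")
      case True
      then obtain r where "pending_after M (\<lambda>_. []) \<tau> p = b # r"
        using snoc.prems(2) Recv by (auto simp: fifo_from_append fifo_from_Recv)
      then show ?thesis
        using IH Recv True dst fifo by (simp add: pending_after_append pending_after_Recv)
    next
      case False
      then show ?thesis
        using IH Recv dst fifo by (simp add: pending_after_append pending_after_def)
    qed
  qed
qed simp

lemma first_inversion:
  assumes k: "k \<in> {1..N}" and p: "p = ring_pred M k" and fifo: "fifo_from M (\<lambda>_. []) \<tau>"
    and bad: "\<exists>\<rho> y. prefix (\<rho> @ [Send y]) \<tau> \<and> src M y = k \<and> pending_after M (\<lambda>_. []) \<rho> p \<noteq> []"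
  obtains \<tau>1 m \<tau>2 y \<tau>3 where "\<tau> = \<tau>1 @ [Send m] @ \<tau>2 @ [Send y] @ \<tau>3" "src M m = p" "src M y = k"
    "\<forall>a. Send a \<in> set \<tau>2 \<longrightarrow> src M a \<noteq> p \<and> src M a \<noteq> k"
    "length (recvd_from M p (\<tau>1 @ \<tau>2)) \<le> length (sent_by M p \<tau>1)"
proof -
  define bad_at where "bad_at n \<longleftrightarrow> (\<exists>\<rho> y. prefix (\<rho> @ [Send y]) \<tau> \<and> length \<rho> = n \<and> src M y = k \<and>
    length (recvd_from M p \<rho>) < length (sent_by M p \<rho>))" for n
  have undelivered_iff: "pending_after M (\<lambda>_. []) \<rho> p \<noteq> [] \<longleftrightarrow> length (recvd_from M p \<rho>) < length (sent_by M p \<rho>)" for \<rho>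
    by (simp add: pending_after_def not_le)
  obtain n where "bad_at n"
    using bad undelivered_iff unfolding bad_at_def by blast
  define n0 where "n0 = (LEAST n. bad_at n)"
  have "bad_at n0"
    unfolding n0_def by (rule LeastI) fact
  have least: "n0 \<le> n" if "bad_at n" for n
    unfolding n0_def using that by (rule Least_le)
  obtain \<rho> y where \<rho>: "prefix (\<rho> @ [Send y]) \<tau>" "length \<rho> = n0" "src M y = k"
    "length (recvd_from M p \<rho>) < length (sent_by M p \<rho>)"
    using \<open>bad_at n0\<close> unfolding bad_at_def by blast
  then have "sent_by M p \<rho> \<noteq> []"
    by auto
  then obtain \<tau>1 m \<tau>2 where \<rho>_split: "\<rho> = \<tau>1 @ [Send m] @ \<tau>2" "src M m = p" "\<forall>a. Send a \<in> set \<tau>2 \<longrightarrow> src M a \<noteq> p"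
    by (rule last_send_by)
  have no_p: "sent_by M p \<tau>2 = []"
    using \<rho>_split(3) by (rule sent_by_eq_Nil)
  have no_k: "src M a \<noteq> k" if in_\<tau>2: "Send a \<in> set \<tau>2" for a
  proof
    assume a: "src M a = k"
    obtain u v where uv: "\<tau>2 = u @ Send a # v" using split_list[OF in_\<tau>2] by blast
    have "bad_at (length (\<tau>1 @ [Send m] @ u))"
      unfolding bad_at_def using \<rho>(1,4) \<rho>_split(1,2) no_p uv a
      by (intro exI[of _ "\<tau>1 @ [Send m] @ u"] exI[of _ a]) (auto simp: prefix_def)
    then show False
      using least \<rho>(2) \<rho>_split(1) uv by fastforce
  qed
  obtain \<tau>3 where "\<tau> = \<rho> @ [Send y] @ \<tau>3"
    using \<rho>(1) by (auto simp: prefix_def)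
  moreover have "length (recvd_from M p (\<tau>1 @ \<tau>2)) \<le> length (sent_by M p \<tau>1)"
    using \<rho>(4) \<rho>_split(1,2) no_p by simp
  ultimately show ?thesis
    using that \<rho>(3) \<rho>_split no_k by auto
qed

lemma reorder_first_inversion:
  assumes k: "k \<in> {1..N}" and p: "p = ring_pred M k" and run: "run M P (init_config P) \<tau> c"
    and bad: "\<exists>\<rho> y. prefix (\<rho> @ [Send y]) \<tau> \<and> src M y = k \<and> pending_after M (\<lambda>_. []) \<rho> p \<noteq> []"
  obtains \<tau>' \<alpha> m \<beta> y \<gamma> where "run M P (init_config P) \<tau>' c" "inversions M p k \<tau>' < inversions M p k \<tau>"
    "actions_of M k \<tau>' = actions_of M k \<tau>" "sends \<tau> = \<alpha> @ [m] @ \<beta> @ [y] @ \<gamma>" "sends \<tau>' = \<alpha> @ \<beta> @ [y, m] @ \<gamma>"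
    "src M m = p" "src M y = k" "\<forall>b\<in>set \<beta>. src M b \<noteq> p \<and> src M b \<noteq> k"
proof -
  have kp: "k \<noteq> p" and succ_p: "ring_succ M p = k"
    using ring_pred_neq[OF k] ring_succ_pred[OF k] p by auto
  obtain \<tau>1 m \<tau>2 y \<tau>3 where split: "\<tau> = \<tau>1 @ [Send m] @ \<tau>2 @ [Send y] @ \<tau>3"
    and m: "src M m = p" and y: "src M y = k" and \<tau>2: "\<forall>a. Send a \<in> set \<tau>2 \<longrightarrow> src M a \<noteq> p \<and> src M a \<noteq> k"
    and undelivered: "length (recvd_from M p (\<tau>1 @ \<tau>2)) \<le> length (sent_by M p \<tau>1)"
    using first_inversion[OF k p _ bad] run by (metis reached_def run_iff_reached)
  define \<tau>' where "\<tau>' = \<tau>1 @ filter (\<lambda>act. actor M act \<noteq> p) \<tau>2 @ [Send y, Send m] @ filter (\<lambda>act. actor M act = p) \<tau>2 @ \<tau>3"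
  have "run M P (init_config P) \<tau>' c"
    unfolding \<tau>'_def using run_swap_sends[of \<tau>1 m \<tau>2 y \<tau>3 c p] run split m y \<tau>2 undelivered succ_p by simp
  moreover have "inversions M p k \<tau>' < inversions M p k \<tau>"
    unfolding \<tau>'_def split by (rule inversions_swap_sends[OF m y kp \<tau>2])
  moreover have "actions_of M k \<tau>' = actions_of M k \<tau>"
    unfolding \<tau>'_def split by (rule actions_of_swap_sends[OF m y kp])
  moreover have no_p: "\<forall>a. Send a \<in> set \<tau>2 \<longrightarrow> src M a \<noteq> p"
    using \<tau>2 by blast
  have "sends \<tau>' = sends \<tau>1 @ sends \<tau>2 @ [y, m] @ sends \<tau>3"
    using sends_filter_not_actor[OF no_p] sends_filter_actor[OF no_p] by (simp add: \<tau>'_def)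
  ultimately show ?thesis
    using that[of \<tau>' "sends \<tau>1" m "sends \<tau>2" y "sends \<tau>3"] split m y \<tau>2 by (simp add: set_sends)
qed

lemma remove_last_undelivered:
  assumes j: "j \<in> {1..N}" and p: "p = ring_pred M j" and run: "run M P (init_config P) \<tau> c"
    and nonempty: "chans c p j \<noteq> []"
  obtains \<tau>' c' \<alpha> m \<gamma> where "run M P (init_config P) \<tau>' c'" "actions_of M j \<tau>' = actions_of M j \<tau>"
    "sends \<tau> = \<alpha> @ [m] @ \<gamma>" "sends \<tau>' = \<alpha> @ \<gamma>" "src M m = p" "\<forall>b\<in>set \<gamma>. src M b \<noteq> p"
proof -
  have "chans c p j = pending_after M (\<lambda>_. []) \<tau> p"
    using run ring_succ_pred[OF j] p by (simp add: run_iff_reached reached_def ring_channels_def)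
  then have undelivered: "length (recvd_from M p \<tau>) < length (sent_by M p \<tau>)"
    using nonempty by (simp add: pending_after_def not_le)
  then obtain \<rho>1 m \<rho>2 where split: "\<tau> = \<rho>1 @ [Send m] @ \<rho>2" and m: "src M m = p"
    and \<rho>2: "\<forall>a. Send a \<in> set \<rho>2 \<longrightarrow> src M a \<noteq> p"
    by (metis last_send_by less_nat_zero_code list.size(3))
  have "length (recvd_from M p (\<rho>1 @ \<rho>2)) \<le> length (sent_by M p \<rho>1)"
    using undelivered split m sent_by_eq_Nil[OF \<rho>2] by simp
  then obtain c' where "run M P (init_config P) (\<rho>1 @ filter (\<lambda>act. actor M act \<noteq> p) \<rho>2) c'"
    using run_remove_undelivered[of \<rho>1 m \<rho>2 c] run split m by auto
  moreover have "actions_of M j (\<rho>1 @ filter (\<lambda>act. actor M act \<noteq> p) \<rho>2) = actions_of M j \<tau>"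
    using split m ring_pred_neq[OF j] p by (simp add: actions_of_filter_actor)
  moreover have "sends (\<rho>1 @ filter (\<lambda>act. actor M act \<noteq> p) \<rho>2) = sends \<rho>1 @ sends \<rho>2"
    using sends_filter_not_actor[OF \<rho>2] by simp
  ultimately show ?thesis
    using that split m \<rho>2 by (simp add: set_sends)
qed

lemma run_send_prefix:
  assumes "run M P (init_config P) (\<tau> @ [Send x] @ \<rho>) c"
  obtains c0 e where "run M P (init_config P) \<tau> c0" "x \<in> msgs M"
    "peer_path (P (src M x)) (init (P (src M x))) (actions_of M (src M x) \<tau> @ [Send x]) e"
proof -
  obtain c1 where "run M P (init_config P) (\<tau> @ [Send x]) c1"
    using assms by (metis append_assoc run_append)
  moreover from this obtain c0 where "run M P (init_config P) \<tau> c0"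
    unfolding run_append by blast
  moreover from calculation(1) have "reached (\<tau> @ [Send x]) c1"
    using run_iff_reached by blast
  ultimately show ?thesis
    using that unfolding reached_def by (auto dest: spec[of _ "src M x"])
qed

end

section \<open>1-synchronizable rings\<close>

locale one_sync_ring = ring_system +
  assumes one_sync: "one_synchronizable M P"
begin

lemma one_bounded_sync_sends:
  assumes "run M P (init_config P) \<Theta> c" "bounded_fifo_trace M 1 \<Theta>"
  shows "sync_sends (sends \<Theta>)"
proof -
  have "Inl (sends \<Theta>) \<in> ST M P 1"
    using assms by (auto simp: ST_def send_traces_def traces_def)
  then have "Inl (sends \<Theta>) \<in> ST M P 0"
    using one_sync by (simp add: one_synchronizable_def)
  then show ?thesis
    by (auto simp: ST_def send_traces_def traces_def sync_sends_def)
qed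

lemma one_bounded_stable_sync_view:
  assumes "run M P (init_config P) \<Theta> c" "bounded_fifo_trace M 1 \<Theta>" "chans c = (\<lambda>i j. [])"
  shows "peer_path (P i) (init (P i)) (sync_view M i (sends \<Theta>)) (ctrl c i)"
proof -
  have "Inr (sends \<Theta>, c) \<in> ST M P 1"
    unfolding ST_def send_traces_def using assms by (intro UnI2 imageI) (force simp: traces_def stable_def)
  then have "Inr (sends \<Theta>, c) \<in> ST M P 0"
    using one_sync by (simp add: one_synchronizable_def)
  then obtain \<sigma> where "synchronous_trace \<sigma>" "sends \<sigma> = sends \<Theta>" "run M P (init_config P) \<sigma> c"
    by (auto simp: ST_def send_traces_def traces_def)
  then have "run M P (init_config P) (sync_actions (sends \<Theta>)) c"
    by (metis synchronous_trace_iff)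
  then show ?thesis
    by (simp add: run_sync_iff)
qed

definition sync_sends_upto :: "nat \<Rightarrow> bool" where
  "sync_sends_upto n \<longleftrightarrow> (\<forall>\<tau> c. run M P (init_config P) \<tau> c \<longrightarrow> length (sends \<tau>) \<le> n \<longrightarrow> sync_sends (sends \<tau>))"

lemma sync_view_late_receive:
  assumes k: "k \<in> {1..N}" and p: "p = ring_pred M k"
    and W: "W = \<alpha> @ [m] @ \<beta> @ [y] @ \<gamma>" and sync: "sync_sends W"
    and m: "src M m = p" and y: "src M y = k" and \<beta>: "\<forall>b\<in>set \<beta>. src M b \<noteq> p \<and> src M b \<noteq> k"
    and path: "peer_path (P k) (init (P k)) (sync_view M k (\<alpha> @ \<beta> @ [y, m] @ \<gamma>) @ \<zeta>) e"
    and \<zeta>: "\<zeta> = [] \<or> (\<exists>x. \<zeta> = [Send x] \<and> x \<in> msgs M \<and> src M x = k)"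
  shows "\<exists>e'. peer_path (P k) (init (P k)) (sync_view M k W @ \<zeta>) e' \<and> (\<zeta> = [] \<longrightarrow> e' = e)"
proof -
  obtain \<Theta> c where \<Theta>: "run M P (init_config P) \<Theta> c" "bounded_fifo_trace M 1 \<Theta>"
    "sends \<Theta> = W @ sends \<zeta>" "ctrl c k = e" "\<zeta> = [] \<longrightarrow> chans c = (\<lambda>i j. [])"
    using late_receive_run[OF assms] by blast
  show ?thesis
  proof (cases "\<zeta> = []")
    case True
    then show ?thesis
      using one_bounded_stable_sync_view[OF \<Theta>(1,2), of k] \<Theta>(3-5) by auto
  next
    case False
    then obtain x where x: "\<zeta> = [Send x]" "x \<in> msgs M" "src M x = k"
      using \<zeta> by blast
    then have "sync_sends (W @ [x])"
      using one_bounded_sync_sends[OF \<Theta>(1,2)] \<Theta>(3) by simp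
    then obtain q where "peer_path (P k) (init (P k)) (sync_view M k (W @ [x])) q"
      unfolding sync_sends_iff by blast
    moreover have "dst M x \<noteq> k"
      using msg_on_ring[OF x(2)] x(3) ring_succ_neq[OF k] by simp
    ultimately show ?thesis
      using x False by auto
  qed
qed

text \<open>Induction on the number of inversions: a send of \<open>k\<close> overtaking a pending message of
  \<open>p\<close> is moved before it, and the resulting path of \<open>k\<close> is carried back by a 1-bounded run
  in which that message is delivered late.\<close>

lemma sync_view_path:
  assumes k: "k \<in> {1..N}" and p: "p = ring_pred M k"
    and \<zeta>: "\<zeta> = [] \<or> (\<exists>x. \<zeta> = [Send x] \<and> x \<in> msgs M \<and> src M x = k)"
  shows "run M P (init_config P) \<tau> c \<Longrightarrow> chans c p k = [] \<Longrightarrow> sync_sends_upto (length (sends \<tau>)) \<Longrightarrow>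
    peer_path (P k) (init (P k)) (actions_of M k \<tau> @ \<zeta>) e \<Longrightarrow>
    \<exists>e'. peer_path (P k) (init (P k)) (sync_view M k (sends \<tau>) @ \<zeta>) e' \<and> (\<zeta> = [] \<longrightarrow> e' = e)"
proof (induction "inversions M p k \<tau>" arbitrary: \<tau> e rule: less_induct)
  case less
  note run = less.prems(1) and empty = less.prems(2) and upto = less.prems(3) and path = less.prems(4)
  have reached: "reached \<tau> c"
    using run run_iff_reached by blast
  show ?case
  proof (cases "\<exists>\<rho> y. prefix (\<rho> @ [Send y]) \<tau> \<and> src M y = k \<and> pending_after M (\<lambda>_. []) \<rho> p \<noteq> []")
    case False
    moreover have "pending_after M (\<lambda>_. []) \<tau> p = []"
      using reached empty ring_succ_pred[OF k] p by (simp add: reached_def ring_channels_def)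
    ultimately have "sync_view M k (sends \<tau>) = actions_of M k \<tau>"
      using sync_view_eq_actions_of[OF k p] reached by (auto simp: reached_def)
    then show ?thesis
      using path by auto
  next
    case True
    then obtain \<tau>' \<alpha> m \<beta> y \<gamma> where \<tau>': "run M P (init_config P) \<tau>' c" "inversions M p k \<tau>' < inversions M p k \<tau>"
      "actions_of M k \<tau>' = actions_of M k \<tau>" and sends: "sends \<tau> = \<alpha> @ [m] @ \<beta> @ [y] @ \<gamma>"
      "sends \<tau>' = \<alpha> @ \<beta> @ [y, m] @ \<gamma>" and my: "src M m = p" "src M y = k"
      and \<beta>: "\<forall>b\<in>set \<beta>. src M b \<noteq> p \<and> src M b \<noteq> k"
      by (rule reorder_first_inversion[OF k p run])
    obtain e'' where "peer_path (P k) (init (P k)) (sync_view M k (\<alpha> @ \<beta> @ [y, m] @ \<gamma>) @ \<zeta>) e''"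
      "\<zeta> = [] \<longrightarrow> e'' = e"
      using less.hyps[OF \<tau>'(2,1) empty] upto path \<tau>'(3) sends by auto
    moreover have "sync_sends (sends \<tau>)"
      using upto run unfolding sync_sends_upto_def by blast
    ultimately show ?thesis
      using sync_view_late_receive[OF k p sends(1) _ my \<beta> _ \<zeta>] by auto
  qed
qed

lemma sync_sends_snoc:
  assumes upto: "sync_sends_upto n"
  shows "length (sends \<tau>) \<le> n \<Longrightarrow> run M P (init_config P) \<tau> c \<Longrightarrow> x \<in> msgs M \<Longrightarrow>
    peer_path (P (src M x)) (init (P (src M x))) (actions_of M (src M x) \<tau> @ [Send x]) e \<Longrightarrow>
    sync_sends (sends \<tau> @ [x])"
proof (induction "length (sends \<tau>)" arbitrary: \<tau> c e rule: less_induct)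
  case less
  note len = less.prems(1) and run = less.prems(2) and x = less.prems(3) and path = less.prems(4)
  define j where "j = src M x"
  define p where "p = ring_pred M j"
  have j: "j \<in> {1..N}" using msg_on_ring[OF x] by (simp add: j_def)
  have sync: "sync_sends (sends \<tau>)"
    using upto run len unfolding sync_sends_upto_def by blast
  show ?case
  proof (cases "chans c p j = []")
    case True
    have "sync_sends_upto (length (sends \<tau>))"
      using upto len unfolding sync_sends_upto_def by auto
    then obtain e' where "peer_path (P j) (init (P j)) (sync_view M j (sends \<tau>) @ [Send x]) e'"
      using sync_view_path[OF j p_def _ run True, of "[Send x]"] path x by (auto simp: j_def)
    then show ?thesis
      using sync_then_send_run[OF j sync x j_def[symmetric]] one_bounded_sync_sends by metis
  next
    case False
    then obtain \<tau>' c' \<alpha> m \<gamma> where \<tau>': "run M P (init_config P) \<tau>' c'" "actions_of M j \<tau>' = actions_of M j \<tau>"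
      and sends: "sends \<tau> = \<alpha> @ [m] @ \<gamma>" "sends \<tau>' = \<alpha> @ \<gamma>" and m: "src M m = p" and \<gamma>: "\<forall>b\<in>set \<gamma>. src M b \<noteq> p"
      by (rule remove_last_undelivered[OF j p_def run])
    then have "sync_sends (\<alpha> @ \<gamma> @ [x])"
      using less.hyps[OF _ _ \<tau>'(1) x] len path by (simp add: j_def)
    then obtain q where "peer_path (P j) (init (P j)) (sync_view M j (\<alpha> @ \<gamma> @ [x])) q"
      unfolding sync_sends_iff by blast
    moreover have "dst M x \<noteq> j"
      using msg_on_ring[OF x] ring_succ_neq[OF j] by (simp add: j_def)
    ultimately show ?thesis
      using undelivered_send_run[OF j p_def sends(1) sync m \<gamma> x j_def[symmetric]] one_bounded_sync_sends
      by (simp add: j_def) metis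
  qed
qed

lemma sync_sends_upto_Suc:
  assumes "sync_sends_upto n"
  shows "sync_sends_upto (Suc n)"
  unfolding sync_sends_upto_def
proof (intro allI impI)
  fix \<tau> c assume run: "run M P (init_config P) \<tau> c" and len: "length (sends \<tau>) \<le> Suc n"
  show "sync_sends (sends \<tau>)"
  proof (cases "sends \<tau> = []")
    case True
    then show ?thesis by (simp add: sync_sends_Nil)
  next
    case False
    then obtain \<tau>1 x \<rho> where \<tau>: "\<tau> = \<tau>1 @ [Send x] @ \<rho>" "sends \<rho> = []"
      by (rule last_send)
    then obtain c0 e where "run M P (init_config P) \<tau>1 c0" "x \<in> msgs M"
      "peer_path (P (src M x)) (init (P (src M x))) (actions_of M (src M x) \<tau>1 @ [Send x]) e"
      using run_send_prefix run by blast
    then show ?thesis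
      using sync_sends_snoc[OF assms] len \<tau> by simp
  qed
qed

theorem run_sync_sends: "run M P (init_config P) \<tau> c \<Longrightarrow> sync_sends (sends \<tau>)"
proof -
  have "sync_sends_upto n" for n
  proof (induction n)
    case 0
    then show ?case by (simp add: sync_sends_upto_def sync_sends_Nil)
  qed (rule sync_sends_upto_Suc)
  then show "run M P (init_config P) \<tau> c \<Longrightarrow> sync_sends (sends \<tau>)"
    unfolding sync_sends_upto_def by blast
qed

theorem stable_run_sync_view:
  assumes run: "run M P (init_config P) \<tau> c" and stable: "chans c = (\<lambda>i j. [])"
  shows "peer_path (P k) (init (P k)) (sync_view M k (sends \<tau>)) (ctrl c k)"
proof (cases "k \<in> {1..N}")
  case True
  have "sync_sends_upto (length (sends \<tau>))"
    using run_sync_sends unfolding sync_sends_upto_def by blast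
  moreover have "peer_path (P k) (init (P k)) (actions_of M k \<tau> @ []) (ctrl c k)"
    using run by (simp add: run_iff_reached reached_def)
  ultimately show ?thesis
    using sync_view_path[OF True refl _ run, of "[]"] stable by auto
next
  case False
  have "wf_actions \<tau>" "peer_path (P k) (init (P k)) (actions_of M k \<tau>) (ctrl c k)"
    using run by (auto simp: run_iff_reached reached_def)
  moreover have "sync_view M k (sends \<tau>) = []"
    using actions_of_outside[OF _ False] sends_in_msgs[OF calculation(1)] by (simp add: wf_actions_sync)
  ultimately show ?thesis
    using actions_of_outside[OF _ False] by simp
qed

lemma ST_omega_subset_ST0: "ST_omega M P \<subseteq> ST M P 0"
proof
  fix z assume "z \<in> ST_omega M P"
  then consider (sends) \<tau> where "z = Inl (sends \<tau>)" "\<tau> \<in> traces_omega M P"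
    | (stable) \<tau> c where "z = Inr (sends \<tau>, c)" "run M P (init_config P) \<tau> c" "stable c"
    unfolding ST_omega_def send_traces_def by (elim UnE imageE) (auto simp only: mem_Collect_eq)
  then show "z \<in> ST M P 0"
  proof cases
    case sends
    then obtain c where "run M P (init_config P) \<tau> c"
      by (auto simp: traces_omega_def traces_def)
    then obtain \<sigma> c' where "synchronous_trace \<sigma>" "run M P (init_config P) \<sigma> c'" "sends \<sigma> = sends \<tau>"
      using run_sync_sends unfolding sync_sends_def by blast
    then have "sends \<tau> \<in> {sends \<tau> |\<tau>. \<tau> \<in> traces M P 0}"
      by (auto simp: traces_def intro!: exI[of _ \<sigma>])
    then show ?thesis
      unfolding sends(1) ST_def send_traces_def by (intro UnI1 imageI)
  next
    case stable
    then have chans: "chans c = (\<lambda>i j. [])"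
      by (auto simp: stable_def)
    have "set (sends \<tau>) \<subseteq> msgs M"
      using stable(2) sends_in_msgs by (simp add: run_iff_reached reached_def)
    then have "run M P (init_config P) (sync_actions (sends \<tau>)) c"
      using stable_run_sync_view[OF stable(2) chans] chans by (simp add: run_sync_iff)
    then have "(sends \<tau>, c) \<in> {(sends \<tau>, c) |\<tau> c. \<tau> \<in> traces M P 0 \<and> run M P (init_config P) \<tau> c \<and> stable c}"
      using stable(3) by (auto simp: traces_def synchronous_trace_iff intro!: exI[of _ "sync_actions (sends \<tau>)"])
    then show ?thesis
      unfolding stable(1) ST_def send_traces_def by (intro UnI2 imageI)
  qed
qed

end

theorem theorem4p15:
  fixes M :: "'m msgset" and P :: "nat \<Rightarrow> ('s, 'm) peer"
  assumes "wf_msgset M"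
    and "oriented_ring M"
    and "wf_system M P"
  shows "one_synchronizable M P \<longleftrightarrow> synchronizable M P"
proof -
  interpret ring_system M P
    using assms(1,2) by unfold_locales
  show ?thesis
  proof
    assume "one_synchronizable M P"
    then interpret one_sync_ring M P
      by unfold_locales
    show "synchronizable M P"
      unfolding synchronizable_def using ST_0_subset_1 ST_1_subset_omega ST_omega_subset_ST0 by blast
  next
    assume "synchronizable M P"
    then show "one_synchronizable M P"
      unfolding synchronizable_def one_synchronizable_def using ST_0_subset_1 ST_1_subset_omega by blast
  qed
qed

end
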